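(* In the reinforcement-learning network model described in the context, the expected payoff process $(H(x_n))_{n\in\mathbb{N}}$ converges almost surely.
   Context: Let $G=(\mathbb{V},E)$ be a finite graph with adjacency $i\sim j$ and (unordered) edge set $E$. Let $(a_{ij})_{i,j\in\mathbb{V}}$ be nonnegative reals with $a_{ij}=a_{ji}$ and $a_{ij}>0$ only if $i\sim j$ (affinities). Let $(p_W)_{W\subseteq\mathbb{V}}$ be nonnegative reals with $\sum_W p_W=1$; for $i\sim j$ put $p_{ij}=\sum_{W\subseteq \mathbb{V}:\, i,j\in W}p_W$, and $p_{ij}=0$ if $i\not\sim j$. Assume there exist $i,j$ with $a_{ij}p_{ij}>0$. Let $v^0_{ij}=v^0_{ji}\ge 0$ with $v^0_{ij}>0$ iff $i\sim j$. The random process: $V^0_{ij}=v^0_{ij}$, $V^n_{ij}=0$ if $i\not\sim j$, $V_i^n=\sum_j V_{ij}^n$. At each time $n$, each vertex $i$ independently chooses one neighbour $j$ with probability $V_{ij}^n/V_i^n$; independently, Nature picks a random subset $W_n\subseteq\mathbb{V}$ with $\mathbb{P}(W_n=W)=p_W$, i.i.d. in $n$; if $i,j\in W_n$, $i\sim j$ and $i,j$ choose each other, then $V^{n+1}_{ij}=V^{n+1}_{ji}=V^n_{ij}+a_{ij}$, otherwise $V^{n+1}_{ij}=V^n_{ij}$. Hence $\mathbb{P}(V_{ij}^{n+1}=V_{ij}^n+a_{ij}\mid\mathcal{F}_n)=p_{ij}(V_{ij}^n)^2/(V_i^nV_j^n)$, with $\mathcal{F}_n$ the natural filtration. Let $T_n=\sum_{i,j\in\mathbb{V}}V_{ij}^n$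 (sum over ordered pairs), $x_{ij}^n=V_{ij}^n/T_n$, $x_i^n=V_i^n/T_n$, $x_n=(x^n_{ij})_{i,j}$. For an array $x=(x_{ij})$ with $x_{ij}=x_{ji}\ge0$, let $x_i=\sum_j x_{ij}$ and $H(x)=\sum_{(i,j):\,x_{ij}>0}a_{ij}p_{ij}\frac{x_{ij}^2}{x_ix_j}$ (the expected payoff). *)

theory Defs
  imports "HOL-Probability.Probability"
begin

definition vsum :: "('v::finite \<Rightarrow> 'v \<Rightarrow> real) \<Rightarrow> 'v \<Rightarrow> real" where
  "vsum V i = (\<Sum>j\<in>UNIV. V i j)"

definition total :: "('v::finite \<Rightarrow> 'v \<Rightarrow> real) \<Rightarrow> real" where
  "total V = (\<Sum>i\<in>UNIV. \<Sum>j\<in>UNIV. V i j)"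

definition normalise :: "('v::finite \<Rightarrow> 'v \<Rightarrow> real) \<Rightarrow> ('v \<Rightarrow> 'v \<Rightarrow> real)" where
  "normalise V = (\<lambda>i j. V i j / total V)"

definition pedge :: "('v \<Rightarrow> 'v \<Rightarrow> bool) \<Rightarrow> ('v::finite set \<Rightarrow> real) \<Rightarrow> 'v \<Rightarrow> 'v \<Rightarrow> real" where
  "pedge adj pW i j = (if adj i j then (\<Sum>W\<in>{W. i \<in> W \<and> j \<in> W}. pW W) else 0)"

definition payoff :: "('v \<Rightarrow> 'v \<Rightarrow> bool) \<Rightarrow> ('v \<Rightarrow> 'v \<Rightarrow> real) \<Rightarrow> ('v::finite set \<Rightarrow> real)
     \<Rightarrow> ('v \<Rightarrow> 'v \<Rightarrow> real) \<Rightarrow> real" where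
  "payoff adj a pW x =
     (\<Sum>(i,j)\<in>{(i,j). x i j > 0}. a i j * pedge adj pW i j * (x i j)\<^sup>2 / (vsum x i * vsum x j))"

text \<open>Choice of vertex i: neighbour j with probability V_ij / V_i (irrelevant if V_i = 0).\<close>
definition choice :: "('v::finite \<Rightarrow> 'v \<Rightarrow> real) \<Rightarrow> 'v \<Rightarrow> 'v pmf" where
  "choice V i = (if vsum V i > 0 \<and> (\<forall>j. V i j \<ge> 0)
                 then embed_pmf (\<lambda>j. V i j / vsum V i) else return_pmf i)"

definition Wdist :: "('v set \<Rightarrow> real) \<Rightarrow> 'v set pmf" where
  "Wdist pW = embed_pmf pW"

definition step :: "('v \<Rightarrow> 'v \<Rightarrow> bool) \<Rightarrow> ('v \<Rightarrow> 'v \<Rightarrow> real) \<Rightarrow> ('v::finite set \<Rightarrow> real)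
     \<Rightarrow> ('v \<Rightarrow> 'v \<Rightarrow> real) \<Rightarrow> ('v \<Rightarrow> 'v \<Rightarrow> real) pmf" where
  "step adj a pW V =
     Pi_pmf UNIV undefined (choice V) \<bind> (\<lambda>c. Wdist pW \<bind> (\<lambda>W.
       return_pmf (\<lambda>i j. if adj i j \<and> i \<in> W \<and> j \<in> W \<and> c i = j \<and> c j = i
                        then V i j + a i j else V i j)))"

end

theory Submission
  imports Defs
begin

text \<open>Along the process, \<open>H(x\<^sub>n) = F(V\<^sub>n)\<close> with \<open>F(V) = \<Sum>\<^sub>i\<^sub>j c\<^sub>i\<^sub>j V\<^sub>i\<^sub>j\<^sup>2 / (V\<^sub>i V\<^sub>j)\<close>,
  \<open>c\<^sub>i\<^sub>j = a\<^sub>i\<^sub>j p\<^sub>i\<^sub>j\<close>. Expanding \<open>F\<close> to second order over one step, the expected first-order change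
  is nonnegative by the Cauchy-Schwarz inequality, and both the second-order remainder and the
  conditional variance of \<open>F(V\<^sub>n\<^sub>+\<^sub>1)\<close> are bounded by a constant times the squared relative growth
  \<open>\<Sum>\<^sub>i (\<Delta>V\<^sub>i / V\<^sub>i)\<^sup>2\<close> of the row sums. Since row sums increase by bounded amounts, this quantity is
  summable along every trajectory, with a uniform bound. Hence \<open>F(V\<^sub>n)\<close> is a martingale with
  summable conditional variances, which converges almost surely by Kolmogorov's maximal
  inequality, plus a drift whose negative part is summable; as \<open>F\<close> is bounded, the drift
  converges too.\<close>

section \<open>Real inequalities\<close>

lemma product_ratio_bounds:
  fixes y z d1 d2 :: real
  assumes "0 < y" "0 < z" "0 \<le> d1" "0 \<le> d2"
  shows "1 - d1/y - d2/z \<le> y*z / ((y+d1)*(z+d2))" and "y*z / ((y+d1)*(z+d2)) \<le> 1"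
proof -
  define u where "u = d1/y"
  define w where "w = d2/z"
  have u: "0 \<le> u" "d1 = u*y" and w: "0 \<le> w" "d2 = w*z"
    using assms by (auto simp: u_def w_def)
  have P: "0 < (1+u)*(1+w)" using u w by (simp add: add_pos_nonneg)
  have "(y+d1)*(z+d2) = y*z*((1+u)*(1+w))" by (simp add: u w algebra_simps)
  then have ratio: "y*z / ((y+d1)*(z+d2)) = 1 / ((1+u)*(1+w))"
    using assms P by simp
  have "(1-u-w)*((1+u)*(1+w)) = 1 + u*w - (u+w)*(u+w) - (u+w)*(u*w)"
    by (simp add: algebra_simps)
  also have "\<dots> \<le> 1"
    using u w by (simp add: algebra_simps mult_nonneg_nonneg)
  finally have "1 - u - w \<le> 1 / ((1+u)*(1+w))" using P by (simp add: field_simps)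
  then show "1 - d1/y - d2/z \<le> y*z / ((y+d1)*(z+d2))" by (simp add: ratio u_def w_def)
  have "1 \<le> (1+u)*(1+w)" using u w by (simp add: algebra_simps)
  then show "y*z / ((y+d1)*(z+d2)) \<le> 1" by (simp add: ratio)
qed

text \<open>Scale-free form of the perturbation of \<open>x\<^sup>2/(y z)\<close> when \<open>y, z\<close> grow by \<open>d\<^sub>1, d\<^sub>2\<close>:
  with \<open>g = x\<^sup>2/(y z)\<close>, \<open>u = d\<^sub>1/y\<close>, \<open>w = d\<^sub>2/z\<close> and \<open>q = y z / ((y + d\<^sub>1)(z + d\<^sub>2))\<close>,
  the perturbed value is \<open>(g + c) q\<close>, where \<open>c\<close> comes from the growth of \<open>x\<close>.\<close>

lemma perturbation_abs_le:
  fixes g c q u w :: real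
  assumes g: "0 \<le> g" "g \<le> 1" and c: "0 \<le> c" "c \<le> 2*w + u*w" and G: "(g+c)*q \<le> 1"
    and q: "1 - u - w \<le> q" "0 \<le> q" "q \<le> 1" and uw: "0 \<le> u" "0 \<le> w"
  shows "\<bar>(g+c)*q - g\<bar> \<le> 3*(u+w)"
proof -
  have "g*(1-q) \<le> 1 - q" using g q by (simp add: mult_left_le_one_le)
  moreover have "g*q \<le> (g+c)*q" using c q by (simp add: mult_right_mono)
  ultimately have lower: "g - (g+c)*q \<le> 3*(u+w)" using q uw by (simp add: algebra_simps)
  have "(g+c)*q - g \<le> 3*(u+w)"
  proof (cases "u \<le> 1")
    case True
    have "(g+c)*q \<le> g+c" using g c q by (intro mult_left_le) auto
    moreover have "u*w \<le> w" using True uw by (simp add: mult_left_le_one_le)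
    ultimately show ?thesis using c uw by argo
  qed (use G g uw in argo)
  with lower show ?thesis by linarith
qed

lemma perturbation_second_order:
  fixes g l q u w :: real
  assumes g: "0 \<le> g" "g \<le> 1" and l: "0 \<le> l" "l \<le> 2*w"
    and q: "1 - u - w \<le> q" "0 \<le> q" and uw: "0 \<le> u" "0 \<le> w"
  shows "(g + l + u*w)*q - g - (l - g*(u+w)) \<ge> -6*(u^2+w^2)"
proof (cases "u + w \<le> 1")
  case True
  have "(u+w)*(u*w) \<le> 1*(u*w)" using True uw by (intro mult_right_mono) auto
  moreover have "(u+w)*l \<le> (u+w)*(2*w)" using l uw by (intro mult_left_mono) auto
  ultimately have "(u+w)*(l + u*w) \<le> 2*(u*w) + 2*w^2 + u*w"
    by (simp add: algebra_simps power2_eq_square)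
  moreover have "2*(u*w) \<le> u^2 + w^2" using sum_squares_bound[of u w] by simp
  moreover have "0 \<le> u^2" "0 \<le> w^2" by simp_all
  ultimately have "-6*(u^2+w^2) \<le> u*w - (u+w)*(l + u*w)" by argo
  also have "\<dots> = (g + l + u*w)*(1-u-w) - g - (l - g*(u+w))" by (simp add: algebra_simps)
  also have "\<dots> \<le> (g + l + u*w)*q - g - (l - g*(u+w))"
    using g l q uw by (simp add: mult_left_mono)
  finally show ?thesis .
next
  case False
  have "(u+w)^2 \<le> 2*(u^2+w^2)" using sum_squares_bound[of u w] by (simp add: power2_sum)
  moreover have "1*1 \<le> (u+w)*(u+w)" "w*1 \<le> (u+w)*(u+w)"
    using False uw by (intro mult_mono; simp)+
  moreover have "0 \<le> (g + l + u*w)*q" "0 \<le> g*(u+w)" using g l q uw by simp_all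
  ultimately show ?thesis using g l by (simp add: power2_eq_square)
qed

text \<open>An entry either stays put or grows together with both of its row sums.\<close>

lemma entry_ratio_perturbation:
  fixes x y z d1 d2 e :: real
  assumes x: "0 < x" "x \<le> y" "x \<le> z" and d: "0 \<le> d1" "0 \<le> d2"
    and e: "e = 0 \<or> (e = d1 \<and> e = d2)"
  shows "\<bar>(x+e)^2/((y+d1)*(z+d2)) - x^2/(y*z)\<bar> \<le> 3*(d1/y + d2/z)"
    and "(x+e)^2/((y+d1)*(z+d2)) - x^2/(y*z) - x^2/(y*z) * (2*e/x - d1/y - d2/z)
           \<ge> -6*((d1/y)^2 + (d2/z)^2)"
proof -
  have y: "0 < y" and z: "0 < z" using x by auto
  define u where "u = d1/y"
  define w where "w = d2/z"
  define g where "g = x^2/(y*z)"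
  define q where "q = y*z/((y+d1)*(z+d2))"
  define l where "l = (if e = 0 then 0 else 2*(x/y)*w)"
  define c where "c = (if e = 0 then 0 else l + u*w)"
  have uw: "0 \<le> u" "0 \<le> w" using y z d by (simp_all add: u_def w_def)
  have q: "1 - u - w \<le> q" "0 \<le> q" "q \<le> 1"
    using product_ratio_bounds[OF y z d] y z d by (simp_all add: q_def u_def w_def)
  have "x*x \<le> y*z" using x by (intro mult_mono) auto
  then have g: "0 \<le> g" "g \<le> 1" using y z by (simp_all add: g_def power2_eq_square)
  have "x/y*w \<le> 1*w" using x y uw by (intro mult_right_mono) auto
  then have l: "0 \<le> l" "l \<le> 2*w" using x y uw by (simp_all add: l_def)
  have expand: "(x+e)^2/(y*z) = g + c"
    using e y z by (auto simp: g_def c_def l_def u_def w_def field_simps power2_eq_square)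
  have G: "(x+e)^2/((y+d1)*(z+d2)) = (g + c)*q"
    using y z d by (simp add: expand[symmetric] q_def)
  have lin: "x^2/(y*z) * (2*e/x - d1/y - d2/z) = l - g*(u+w)"
    using e x y z by (auto simp: g_def l_def u_def w_def field_simps power2_eq_square)
  have "(x+e)*(x+e) \<le> (y+d1)*(z+d2)" using x d e by (intro mult_mono) auto
  then have "(g + c)*q \<le> 1" unfolding G[symmetric] using y z d by (simp add: power2_eq_square)
  moreover have "0 \<le> c" "c \<le> 2*w + u*w" using l uw by (simp_all add: c_def)
  ultimately show "\<bar>(x+e)^2/((y+d1)*(z+d2)) - x^2/(y*z)\<bar> \<le> 3*(d1/y + d2/z)"
    using perturbation_abs_le[OF g _ _ _ q uw] by (simp add: G g_def u_def w_def)
  have "(g + c)*q - g - (l - g*(u+w)) \<ge> -6*(u^2+w^2)"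
  proof (cases "e = 0")
    case True
    have "(g + c)*q - g - (l - g*(u+w)) = g*(q - (1 - u - w))"
      using True by (simp add: c_def l_def algebra_simps)
    moreover have "0 \<le> g*(q - (1 - u - w))" "0 \<le> u^2 + w^2" using g q by simp_all
    ultimately show ?thesis by argo
  next
    case False
    then show ?thesis using perturbation_second_order[OF g l q(1,2) uw] by (simp add: c_def add.assoc)
  qed
  then show "(x+e)^2/((y+d1)*(z+d2)) - x^2/(y*z) - x^2/(y*z) * (2*e/x - d1/y - d2/z)
               \<ge> -6*((d1/y)^2 + (d2/z)^2)"
    unfolding G lin by (simp only: g_def u_def w_def)
qed

lemma sum_squared_div_sum_le:
  fixes s m :: "'a \<Rightarrow> real"
  assumes s: "\<And>j. j \<in> A \<Longrightarrow> 0 \<le> s j" and m: "\<And>j. j \<in> A \<Longrightarrow> s j = 0 \<Longrightarrow> m j = 0"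
  shows "(\<Sum>j\<in>A. m j)^2 / (\<Sum>j\<in>A. s j) \<le> (\<Sum>j\<in>A. (m j)^2 / s j)"
proof -
  have "(\<Sum>j\<in>A. m j)^2 = (\<Sum>j\<in>A. (m j / sqrt (s j)) * sqrt (s j))^2"
    using s m by (intro arg_cong[where f = "\<lambda>x. x^2"] sum.cong) auto
  also have "\<dots> \<le> (\<Sum>j\<in>A. (m j / sqrt (s j))^2) * (\<Sum>j\<in>A. (sqrt (s j))^2)"
    by (rule Cauchy_Schwarz_ineq_sum)
  also have "\<dots> = (\<Sum>j\<in>A. (m j)^2 / s j) * (\<Sum>j\<in>A. s j)"
    using s by (simp add: power_divide)
  finally have "(\<Sum>j\<in>A. m j)^2 \<le> (\<Sum>j\<in>A. (m j)^2 / s j) * (\<Sum>j\<in>A. s j)" .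
  moreover have "0 \<le> (\<Sum>j\<in>A. (m j)^2 / s j)" "0 \<le> (\<Sum>j\<in>A. s j)"
    using s by (simp_all add: sum_nonneg)
  ultimately show ?thesis by (cases "(\<Sum>j\<in>A. s j) = 0") (simp_all add: divide_le_eq)
qed

lemma sq_increment_le_recip_diff:
  fixes y d A m :: real
  assumes "0 < m" "m \<le> y" "0 \<le> d" "d \<le> A"
  shows "(d/y)^2 \<le> (A + A^2/m) * (1/y - 1/(y+d))"
proof -
  have y: "0 < y" and yd: "0 < y + d" using assms by simp_all
  have "d + d^2/y \<le> A + A^2/m"
    using assms y by (intro add_mono frac_le power_mono) auto
  moreover have "0 \<le> d/(y*(y+d))" using assms y by simp
  ultimately have "(d + d^2/y) * (d/(y*(y+d))) \<le> (A + A^2/m) * (d/(y*(y+d)))"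
    by (rule mult_right_mono)
  moreover have "d + d^2/y = d*(y+d)/y" using y by (simp add: field_simps power2_eq_square)
  then have "(d + d^2/y) * (d/(y*(y+d))) = (d/y)^2" using y yd by (simp add: power2_eq_square)
  moreover have "d/(y*(y+d)) = 1/y - 1/(y+d)" using y yd by (simp add: field_simps)
  ultimately show ?thesis by simp
qed

text \<open>The squared relative increments of a slowly growing positive sequence are summable,
  because \<open>(d/y)\<^sup>2 \<le> C (1/y - 1/(y+d))\<close> telescopes.\<close>

lemma sum_sq_rel_increments_le:
  fixes y :: "nat \<Rightarrow> real"
  assumes y0: "0 < y 0" and A: "0 \<le> A"
    and incr: "\<And>k. k < n \<Longrightarrow> y k \<le> y (Suc k) \<and> y (Suc k) \<le> y k + A"
  shows "(\<Sum>k<n. ((y (Suc k) - y k) / y k)^2) \<le> (A + A^2 / y 0) / y 0"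
proof -
  have "(\<Sum>k<n. ((y (Suc k) - y k) / y k)^2) \<le> (A + A^2 / y 0) * (1 / y 0 - 1 / y n)
        \<and> y 0 \<le> y n"
    using incr
  proof (induction n)
    case (Suc n)
    then have IH: "(\<Sum>k<n. ((y (Suc k) - y k) / y k)^2) \<le> (A + A^2 / y 0) * (1 / y 0 - 1 / y n)"
      and yn: "y 0 \<le> y n" and step: "y n \<le> y (Suc n)" "y (Suc n) \<le> y n + A"
      by auto
    have "((y (Suc n) - y n) / y n)^2 \<le> (A + A^2 / y 0) * (1 / y n - 1 / (y n + (y (Suc n) - y n)))"
      using y0 yn step by (intro sq_increment_le_recip_diff) auto
    with IH yn step show ?case by (simp add: algebra_simps)
  qed simp
  moreover have "(A + A^2 / y 0) * (1 / y 0 - 1 / y n) \<le> (A + A^2 / y 0) * (1 / y 0)"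
    if "y 0 \<le> y n" using that y0 A by (intro mult_left_mono) auto
  ultimately show ?thesis by fastforce
qed

lemma convergent_bounded_incseq:
  fixes X :: "nat \<Rightarrow> real"
  assumes "incseq X" "\<And>n. X n \<le> B"
  shows "convergent X"
proof -
  obtain L where "X \<longlonglongrightarrow> L" using incseq_convergent[of X B] assms by blast
  then show ?thesis by (auto simp: convergent_def)
qed

lemma (in prob_space) AE_notin_if_measure_le_tendsto_0:
  assumes "N \<in> sets M" "\<And>m. measure M N \<le> f m" "f \<longlonglongrightarrow> 0"
  shows "AE \<omega> in M. \<omega> \<notin> N"
proof -
  have "measure M N \<le> 0" using LIMSEQ_le_const[OF assms(3)] assms(2) by blast
  then have "N \<in> null_sets M"
    using assms(1) by (auto simp: emeasure_eq_measure measure_le_0_iff intro!: null_setsI)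
  then show ?thesis using AE_iff_null_sets assms(1) by blast
qed

lemma (in finite_measure) measure_UN_incseq_le:
  assumes "\<And>K. A K \<in> sets M" "incseq A" "\<And>K. measure M (A K) \<le> B"
  shows "measure M (\<Union>K. A K) \<le> B"
  by (rule LIMSEQ_le_const2[OF finite_Lim_measure_incseq]) (use assms in auto)

section \<open>The transition kernel\<close>

definition reinforce :: "('v \<Rightarrow> 'v \<Rightarrow> bool) \<Rightarrow> ('v \<Rightarrow> 'v \<Rightarrow> real) \<Rightarrow> ('v \<Rightarrow> 'v \<Rightarrow> real)
    \<Rightarrow> ('v \<Rightarrow> 'v) \<Rightarrow> 'v set \<Rightarrow> ('v \<Rightarrow> 'v \<Rightarrow> real)" where
  "reinforce adj a s c W =
     (\<lambda>i j. if adj i j \<and> i \<in> W \<and> j \<in> W \<and> c i = j \<and> c j = i then s i j + a i j else s i j)"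

lemma step_eq_map_pmf:
  "step adj a pW s =
     map_pmf (\<lambda>(c, W). reinforce adj a s c W) (pair_pmf (Pi_pmf UNIV undefined (choice s)) (Wdist pW))"
  unfolding step_def pair_pmf_def map_pmf_def reinforce_def
  by (simp add: bind_assoc_pmf bind_return_pmf)

lemma set_pmf_step: "set_pmf (step adj a pW s) \<subseteq> range (\<lambda>(c, W). reinforce adj a s c W)"
  unfolding step_eq_map_pmf by auto

lemma finite_set_pmf_step: "finite (set_pmf (step adj a pW (s :: 'v::finite \<Rightarrow> 'v \<Rightarrow> real)))"
  by (rule finite_subset[OF set_pmf_step]) auto

lemma sum_pmf_step:
  fixes s :: "'v::finite \<Rightarrow> 'v \<Rightarrow> real"
  shows "(\<Sum>t\<in>set_pmf (step adj a pW s). pmf (step adj a pW s) t * f t) =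
    (\<Sum>c\<in>UNIV. \<Sum>W\<in>UNIV. pmf (Pi_pmf UNIV undefined (choice s)) c * pmf (Wdist pW) W
                          * f (reinforce adj a s c W))"
proof -
  let ?CW = "pair_pmf (Pi_pmf UNIV undefined (choice s)) (Wdist pW)"
  have "(\<Sum>t\<in>set_pmf (step adj a pW s). pmf (step adj a pW s) t * f t)
      = measure_pmf.expectation (step adj a pW s) f"
    by (subst integral_measure_pmf_real[OF finite_set_pmf_step]) (auto simp: mult.commute)
  also have "\<dots> = measure_pmf.expectation ?CW (\<lambda>(c, W). f (reinforce adj a s c W))"
    unfolding step_eq_map_pmf by (simp add: case_prod_unfold)
  also have "\<dots> = (\<Sum>x\<in>UNIV. (\<lambda>(c, W). f (reinforce adj a s c W)) x * pmf ?CW x)"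
    by (rule integral_measure_pmf_real) auto
  also have "\<dots> = (\<Sum>c\<in>UNIV. \<Sum>W\<in>UNIV. pmf (Pi_pmf UNIV undefined (choice s)) c * pmf (Wdist pW) W
                                   * f (reinforce adj a s c W))"
    unfolding UNIV_Times_UNIV[symmetric] sum.cartesian_product
    by (intro sum.cong refl) (auto simp: pmf_pair mult_ac)
  finally show ?thesis .
qed

lemma pmf_Wdist:
  fixes pW :: "'v::finite set \<Rightarrow> real"
  assumes "\<And>W. 0 \<le> pW W" "(\<Sum>W\<in>UNIV. pW W) = 1"
  shows "pmf (Wdist pW) W = pW W"
proof -
  have "(\<integral>\<^sup>+x. ennreal (pW x) \<partial>count_space UNIV) = 1"
    using assms by (simp add: nn_integral_count_space_finite sum_ennreal)
  then show ?thesis unfolding Wdist_def using assms by (subst pmf_embed_pmf) auto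
qed

lemma pmf_choice:
  fixes s :: "'v::finite \<Rightarrow> 'v \<Rightarrow> real"
  assumes "\<And>i j. 0 \<le> s i j" "0 < vsum s i"
  shows "pmf (choice s i) j = s i j / vsum s i"
proof -
  have "(\<integral>\<^sup>+x. ennreal (s i x / vsum s i) \<partial>count_space UNIV) = 1"
    using assms by (simp add: nn_integral_count_space_finite sum_ennreal
        sum_divide_distrib[symmetric] vsum_def)
  then show ?thesis unfolding choice_def using assms by (simp add: pmf_embed_pmf)
qed

lemma prob_mutual_choice:
  fixes s :: "'v::finite \<Rightarrow> 'v \<Rightarrow> real"
  assumes "\<And>i j. 0 \<le> s i j" "0 < vsum s i" "0 < vsum s j" "i \<noteq> j"
  shows "(\<Sum>c\<in>UNIV. pmf (Pi_pmf UNIV undefined (choice s)) c * (if c i = j \<and> c j = i then 1 else 0))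
     = (s i j / vsum s i) * (s j i / vsum s j)"
proof -
  let ?C = "Pi_pmf UNIV undefined (choice s)"
  define B where "B = (\<lambda>x. if x = i then {j} else if x = j then {i} else (UNIV :: 'v set))"
  have "(\<Sum>c\<in>UNIV. pmf ?C c * (if c i = j \<and> c j = i then 1 else 0))
      = (\<Sum>c\<in>{c. c i = j \<and> c j = i}. pmf ?C c)"
    by (rule sum.mono_neutral_cong_right) auto
  also have "\<dots> = measure_pmf.prob ?C {c. c i = j \<and> c j = i}"
    by (rule measure_measure_pmf_finite[symmetric]) auto
  also have "{c. c i = j \<and> c j = i} = Pi UNIV B"
    using assms(4) by (auto simp: B_def Pi_def)
  also have "measure_pmf.prob ?C (Pi UNIV B) = (\<Prod>x\<in>UNIV. measure_pmf.prob (choice s x) (B x))"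
    by (rule measure_Pi_pmf_Pi) auto
  also have "\<dots> = (\<Prod>x\<in>{i,j}. measure_pmf.prob (choice s x) (B x))"
    by (rule prod.mono_neutral_right) (auto simp: B_def)
  also have "\<dots> = pmf (choice s i) j * pmf (choice s j) i"
    using assms(4) by (simp add: B_def measure_pmf_single)
  finally show ?thesis using assms by (simp add: pmf_choice)
qed

lemma expected_reinforced_entry:
  fixes s :: "'v::finite \<Rightarrow> 'v \<Rightarrow> real"
  assumes pW: "\<And>W. 0 \<le> pW W" "(\<Sum>W\<in>UNIV. pW W) = 1"
    and s: "\<And>i j. 0 \<le> s i j" "0 < vsum s i" "0 < vsum s j" and adj: "adj i j" "i \<noteq> j"
  shows "(\<Sum>c\<in>UNIV. \<Sum>W\<in>UNIV. pmf (Pi_pmf UNIV undefined (choice s)) c * pmf (Wdist pW) W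
                                 * reinforce adj a s c W i j)
     = s i j + a i j * pedge adj pW i j * ((s i j / vsum s i) * (s j i / vsum s j))"
proof -
  let ?pc = "pmf (Pi_pmf UNIV undefined (choice s))"
  let ?mutual = "\<lambda>c. if c i = j \<and> c j = i then 1 else 0 :: real"
  let ?inW = "\<lambda>W. if i \<in> W \<and> j \<in> W then 1 else 0 :: real"
  have "(\<Sum>c\<in>UNIV. ?pc c) = 1" by (rule sum_pmf_eq_1) auto
  moreover have "pedge adj pW i j = (\<Sum>W\<in>UNIV. pW W * ?inW W)"
    using adj unfolding pedge_def by (auto intro!: sum.mono_neutral_cong_left split: if_splits)
  moreover have "(\<Sum>c\<in>UNIV. \<Sum>W\<in>UNIV. ?pc c * pmf (Wdist pW) W * reinforce adj a s c W i j)
      = (\<Sum>c\<in>UNIV. \<Sum>W\<in>UNIV. ?pc c * pW W * s i j + a i j * ((?pc c * ?mutual c) * (pW W * ?inW W)))"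
    using adj by (intro sum.cong refl) (auto simp: reinforce_def pmf_Wdist[OF pW] algebra_simps)
  moreover have "\<dots> = (\<Sum>c\<in>UNIV. ?pc c) * (\<Sum>W\<in>UNIV. pW W) * s i j
                    + a i j * ((\<Sum>c\<in>UNIV. ?pc c * ?mutual c) * (\<Sum>W\<in>UNIV. pW W * ?inW W))"
    by (simp add: sum.distrib sum_distrib_left sum_distrib_right mult_ac)
  ultimately show ?thesis using pW(2) prob_mutual_choice[OF s adj(2)] by simp
qed

section \<open>One-step estimates for the payoff\<close>

locale reinforcement_model =
  fixes adj :: "'v::finite \<Rightarrow> 'v \<Rightarrow> bool"
    and a :: "'v \<Rightarrow> 'v \<Rightarrow> real"
    and pW :: "'v set \<Rightarrow> real"
    and v0 :: "'v \<Rightarrow> 'v \<Rightarrow> real"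
  assumes adj_sym: "\<And>i j. adj i j \<longleftrightarrow> adj j i"
    and adj_irrefl: "\<And>i. \<not> adj i i"
    and a_nonneg: "\<And>i j. a i j \<ge> 0"
    and a_sym: "\<And>i j. a i j = a j i"
    and a_adj: "\<And>i j. a i j > 0 \<Longrightarrow> adj i j"
    and pW_nonneg: "\<And>W. pW W \<ge> 0"
    and pW_sum: "(\<Sum>W\<in>UNIV. pW W) = 1"
    and nondeg: "\<exists>i j. a i j * pedge adj pW i j > 0"
    and v0_sym: "\<And>i j. v0 i j = v0 j i"
    and v0_nonneg: "\<And>i j. v0 i j \<ge> 0"
    and v0_pos: "\<And>i j. v0 i j > 0 \<longleftrightarrow> adj i j"
begin

definition coef :: "'v \<Rightarrow> 'v \<Rightarrow> real" where
  "coef i j = a i j * pedge adj pW i j"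

definition coef_total :: real where
  "coef_total = (\<Sum>i\<in>UNIV. \<Sum>j\<in>UNIV. coef i j)"

definition a_total :: real where
  "a_total = (\<Sum>i\<in>UNIV. \<Sum>j\<in>UNIV. a i j)"

definition ratio :: "('v \<Rightarrow> 'v \<Rightarrow> real) \<Rightarrow> 'v \<Rightarrow> 'v \<Rightarrow> real" where
  "ratio s i j = (s i j)^2 / (vsum s i * vsum s j)"

definition H :: "('v \<Rightarrow> 'v \<Rightarrow> real) \<Rightarrow> real" where
  "H s = (\<Sum>i\<in>UNIV. \<Sum>j\<in>UNIV. coef i j * ratio s i j)"

definition admissible :: "('v \<Rightarrow> 'v \<Rightarrow> real) \<Rightarrow> bool" where
  "admissible s \<longleftrightarrow> (\<forall>i j. s i j = s j i) \<and> (\<forall>i j. v0 i j \<le> s i j) \<and> (\<forall>i j. \<not> adj i j \<longrightarrow> s i j = 0)"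

text \<open>Every vertex chooses a single neighbour, so in one step each row gains at most one
  reinforcement.\<close>

definition elementary_step :: "('v \<Rightarrow> 'v \<Rightarrow> real) \<Rightarrow> ('v \<Rightarrow> 'v \<Rightarrow> real) \<Rightarrow> bool" where
  "elementary_step s t \<longleftrightarrow>
     (\<forall>i j. t i j = s i j \<or> (adj i j \<and> t i j = s i j + a i j \<and> (\<forall>k. k \<noteq> j \<longrightarrow> t i k = s i k)))"

definition row_incr :: "('v \<Rightarrow> 'v \<Rightarrow> real) \<Rightarrow> ('v \<Rightarrow> 'v \<Rightarrow> real) \<Rightarrow> 'v \<Rightarrow> real" where
  "row_incr s t i = vsum t i - vsum s i"

definition rel_row_incr :: "('v \<Rightarrow> 'v \<Rightarrow> real) \<Rightarrow> ('v \<Rightarrow> 'v \<Rightarrow> real) \<Rightarrow> 'v \<Rightarrow> real" where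
  "rel_row_incr s t i = row_incr s t i / vsum s i"

definition rel_growth :: "('v \<Rightarrow> 'v \<Rightarrow> real) \<Rightarrow> ('v \<Rightarrow> 'v \<Rightarrow> real) \<Rightarrow> real" where
  "rel_growth s t = (\<Sum>i\<in>UNIV. (rel_row_incr s t i)^2)"

text \<open>The first-order part of \<open>H t - H s\<close>, from
  \<open>\<delta>(x\<^sup>2/(y z)) = x\<^sup>2/(y z) * (2 \<delta>x/x - \<delta>y/y - \<delta>z/z)\<close>.\<close>

definition H_first_order :: "('v \<Rightarrow> 'v \<Rightarrow> real) \<Rightarrow> ('v \<Rightarrow> 'v \<Rightarrow> real) \<Rightarrow> real" where
  "H_first_order s t = (\<Sum>i\<in>UNIV. \<Sum>j\<in>UNIV. coef i j * ratio s i j *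
     (2 * (t i j - s i j) / s i j - rel_row_incr s t i - rel_row_incr s t j))"

definition E_step :: "('v \<Rightarrow> 'v \<Rightarrow> real) \<Rightarrow> (('v \<Rightarrow> 'v \<Rightarrow> real) \<Rightarrow> real) \<Rightarrow> real" where
  "E_step s f = (\<Sum>t\<in>set_pmf (step adj a pW s). pmf (step adj a pW s) t * f t)"

definition mean_incr :: "('v \<Rightarrow> 'v \<Rightarrow> real) \<Rightarrow> 'v \<Rightarrow> 'v \<Rightarrow> real" where
  "mean_incr s i j = coef i j * ratio s i j"

definition drift :: "('v \<Rightarrow> 'v \<Rightarrow> real) \<Rightarrow> real" where
  "drift s = E_step s (\<lambda>t. H t - H s)"

definition growth_budget :: real where
  "growth_budget = (\<Sum>i\<in>UNIV. if 0 < vsum v0 i then (a_total + a_total^2 / vsum v0 i) / vsum v0 i else 0)"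

lemma pedge_nonneg: "0 \<le> pedge adj pW i j"
  unfolding pedge_def using pW_nonneg by (auto intro: sum_nonneg)

lemma pedge_sym: "pedge adj pW i j = pedge adj pW j i"
  unfolding pedge_def using adj_sym by (auto intro!: sum.cong)

lemma coef_nonneg: "0 \<le> coef i j"
  unfolding coef_def using a_nonneg pedge_nonneg by simp

lemma coef_sym: "coef i j = coef j i"
  unfolding coef_def using a_sym pedge_sym by simp

lemma coef_total_nonneg: "0 \<le> coef_total"
  unfolding coef_total_def using coef_nonneg by (simp add: sum_nonneg)

lemma a_le_a_total: "a i j \<le> a_total"
proof -
  have "a i j \<le> (\<Sum>j\<in>UNIV. a i j)" using a_nonneg by (intro member_le_sum) auto
  also have "\<dots> \<le> a_total" unfolding a_total_def using a_nonneg by (intro member_le_sum sum_nonneg) auto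
  finally show ?thesis .
qed

lemma admissible_v0: "admissible v0"
proof -
  have "\<not> adj i j \<Longrightarrow> v0 i j = 0" for i j using v0_pos[of i j] v0_nonneg[of i j] by linarith
  then show ?thesis unfolding admissible_def using v0_sym by auto
qed

lemma admissible_nonneg: "admissible s \<Longrightarrow> 0 \<le> s i j"
  unfolding admissible_def using v0_nonneg by (meson order.trans)

lemma admissible_pos_iff: "admissible s \<Longrightarrow> 0 < s i j \<longleftrightarrow> adj i j"
  unfolding admissible_def using v0_pos by (metis order.strict_trans2 order_less_irrefl)

lemma admissible_le_vsum: "admissible s \<Longrightarrow> s i j \<le> vsum s i"
  unfolding vsum_def using admissible_nonneg by (intro member_le_sum) auto

lemma admissible_vsum_nonneg: "admissible s \<Longrightarrow> 0 \<le> vsum s i"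
  unfolding vsum_def using admissible_nonneg by (intro sum_nonneg) auto

lemma admissible_vsum_pos: "admissible s \<Longrightarrow> adj i j \<Longrightarrow> 0 < vsum s i"
  using admissible_le_vsum admissible_pos_iff by (meson order.strict_trans2)

lemma admissible_reinforce: "admissible s \<Longrightarrow> admissible (reinforce adj a s c W)"
  unfolding admissible_def reinforce_def using adj_sym a_sym a_nonneg by (auto simp: add_increasing2)

lemma elementary_step_reinforce: "elementary_step s (reinforce adj a s c W)"
  unfolding elementary_step_def reinforce_def by auto

lemma admissible_step: "t \<in> set_pmf (step adj a pW s) \<Longrightarrow> admissible s \<Longrightarrow> admissible t"
  using set_pmf_step admissible_reinforce by fastforce

lemma elementary_step_step: "t \<in> set_pmf (step adj a pW s) \<Longrightarrow> elementary_step s t"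
  using set_pmf_step elementary_step_reinforce by fastforce

lemma row_incr_reinforced:
  assumes "elementary_step s t" "t i j \<noteq> s i j"
  shows "row_incr s t i = a i j" "t i j = s i j + a i j" "adj i j"
proof -
  have h: "adj i j \<and> t i j = s i j + a i j \<and> (\<forall>k. k \<noteq> j \<longrightarrow> t i k = s i k)"
    using assms unfolding elementary_step_def by metis
  then show "t i j = s i j + a i j" "adj i j" by auto
  have "row_incr s t i = (\<Sum>k\<in>UNIV. t i k - s i k)"
    unfolding row_incr_def vsum_def by (simp add: sum_subtractf)
  also have "\<dots> = (\<Sum>k\<in>UNIV. if k = j then a i j else 0)"
    using h by (intro sum.cong) auto
  finally show "row_incr s t i = a i j" by simp
qed

lemma row_incr_bounds:
  assumes "elementary_step s t"
  shows "0 \<le> row_incr s t i" "row_incr s t i \<le> a_total"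
proof -
  have "0 \<le> row_incr s t i \<and> row_incr s t i \<le> a_total"
  proof (cases "\<forall>j. t i j = s i j")
    case True
    then have "row_incr s t i = 0" unfolding row_incr_def vsum_def by simp
    then show ?thesis using a_nonneg by (simp add: a_total_def sum_nonneg)
  next
    case False
    then obtain j where "t i j \<noteq> s i j" by auto
    then show ?thesis using row_incr_reinforced[OF assms] a_nonneg a_le_a_total by metis
  qed
  then show "0 \<le> row_incr s t i" "row_incr s t i \<le> a_total" by auto
qed

lemma row_incr_partner:
  assumes "admissible s" "admissible t" "elementary_step s t" "t i j \<noteq> s i j"
  shows "row_incr s t j = t i j - s i j"
proof -
  have "t j i \<noteq> s j i" using assms(1,2,4) unfolding admissible_def by metis
  then have "row_incr s t j = a j i" using row_incr_reinforced[OF assms(3)] by metis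
  then show ?thesis using row_incr_reinforced[OF assms(3,4)] a_sym by simp
qed

lemma total_pos: "admissible s \<Longrightarrow> 0 < total s"
proof -
  assume s: "admissible s"
  obtain i j where "0 < a i j * pedge adj pW i j" using nondeg by auto
  then have "0 < a i j" using pedge_nonneg[of i j] a_nonneg[of i j]
    by (metis less_eq_real_def mult_zero_left)
  then have "0 < s i j" using a_adj admissible_pos_iff[OF s] by auto
  also have "s i j \<le> vsum s i" by (rule admissible_le_vsum[OF s])
  also have "vsum s i \<le> total s" unfolding total_def vsum_def using admissible_vsum_nonneg[OF s]
    by (intro member_le_sum) (auto simp: vsum_def)
  finally show ?thesis .
qed

lemma payoff_normalise: assumes s: "admissible s" shows "payoff adj a pW (normalise s) = H s"
proof -
  have T: "0 < total s" by (rule total_pos[OF s])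
  have vs: "vsum (normalise s) i = vsum s i / total s" for i
    unfolding vsum_def normalise_def by (simp add: sum_divide_distrib)
  have "payoff adj a pW (normalise s) = (\<Sum>(i,j)\<in>{(i,j). normalise s i j > 0}. coef i j * ratio s i j)"
    unfolding payoff_def vs using T
    by (intro sum.cong) (auto simp: normalise_def coef_def ratio_def field_simps power2_eq_square)
  also have "\<dots> = (\<Sum>(i,j)\<in>UNIV. coef i j * ratio s i j)"
  proof (rule sum.mono_neutral_left)
    show "\<forall>x\<in>UNIV - {(i, j). 0 < normalise s i j}. (case x of (i,j) \<Rightarrow> coef i j * ratio s i j) = 0"
    proof
      fix x assume "x \<in> UNIV - {(i, j). 0 < normalise s i j}"
      then obtain i j where x: "x = (i,j)" "\<not> 0 < s i j / total s" by (auto simp: normalise_def)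
      then have "s i j = 0" using T admissible_nonneg[OF s, of i j] by (simp add: field_simps)
      then show "(case x of (i,j) \<Rightarrow> coef i j * ratio s i j) = 0" using x by (simp add: ratio_def)
    qed
  qed auto
  also have "\<dots> = H s" unfolding H_def UNIV_Times_UNIV[symmetric] sum.cartesian_product by simp
  finally show ?thesis .
qed

lemma ratio_bounds: assumes "admissible s" shows "0 \<le> ratio s i j" "ratio s i j \<le> 1"
proof -
  show "0 \<le> ratio s i j" unfolding ratio_def using admissible_vsum_nonneg[OF assms] by simp
  have "s i j * s i j \<le> vsum s i * vsum s j"
    using admissible_le_vsum[OF assms, of i j] admissible_le_vsum[OF assms, of j i]
      admissible_nonneg[OF assms, of i j] assms
    unfolding admissible_def by (intro mult_mono) auto
  moreover have "0 \<le> vsum s i * vsum s j" using admissible_vsum_nonneg[OF assms] by simp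
  ultimately show "ratio s i j \<le> 1" unfolding ratio_def
    by (cases "vsum s i * vsum s j = 0") (auto simp: power2_eq_square divide_le_eq_1 less_eq_real_def)
qed

lemma H_bounds: assumes "admissible s" shows "0 \<le> H s" "H s \<le> coef_total"
  unfolding H_def coef_total_def using ratio_bounds[OF assms] coef_nonneg
  by (auto intro!: sum_nonneg sum_mono simp: mult_left_le)

lemma rel_row_incr_nonneg: "admissible s \<Longrightarrow> elementary_step s t \<Longrightarrow> 0 \<le> rel_row_incr s t i"
  unfolding rel_row_incr_def using row_incr_bounds admissible_vsum_nonneg by simp

lemma rel_row_incr_sq_le: "(rel_row_incr s t i)^2 \<le> rel_growth s t"
  unfolding rel_growth_def by (intro member_le_sum) auto

lemma rel_growth_nonneg: "0 \<le> rel_growth s t"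
  unfolding rel_growth_def by (simp add: sum_nonneg)

lemma ratio_perturbation:
  assumes s: "admissible s" and t: "admissible t" and st: "elementary_step s t"
  shows "\<bar>ratio t i j - ratio s i j\<bar> \<le> 3 * (rel_row_incr s t i + rel_row_incr s t j)"
    and "ratio t i j - ratio s i j
           - ratio s i j * (2 * (t i j - s i j) / s i j - rel_row_incr s t i - rel_row_incr s t j)
         \<ge> -6 * ((rel_row_incr s t i)^2 + (rel_row_incr s t j)^2)"
proof -
  have "\<bar>ratio t i j - ratio s i j\<bar> \<le> 3 * (rel_row_incr s t i + rel_row_incr s t j) \<and>
      ratio t i j - ratio s i j
        - ratio s i j * (2 * (t i j - s i j) / s i j - rel_row_incr s t i - rel_row_incr s t j)
      \<ge> -6 * ((rel_row_incr s t i)^2 + (rel_row_incr s t j)^2)"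
  proof (cases "adj i j")
    case False
    then have "s i j = 0" "t i j = 0" using s t unfolding admissible_def by auto
    then show ?thesis using rel_row_incr_nonneg[OF s st] by (simp add: ratio_def)
  next
    case True
    have "s j i = s i j" using s unfolding admissible_def by metis
    then have x: "0 < s i j" "s i j \<le> vsum s i" "s i j \<le> vsum s j"
      using True admissible_pos_iff[OF s] admissible_le_vsum[OF s, of i j] admissible_le_vsum[OF s, of j i]
      by auto
    have e: "t i j - s i j = 0 \<or> (t i j - s i j = row_incr s t i \<and> t i j - s i j = row_incr s t j)"
      using row_incr_reinforced[OF st, of i j] row_incr_partner[OF s t st, of i j] by auto
    have "vsum s i + row_incr s t i = vsum t i" "vsum s j + row_incr s t j = vsum t j"
      "s i j + (t i j - s i j) = t i j"
      unfolding row_incr_def by auto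
    with entry_ratio_perturbation[OF x row_incr_bounds(1)[OF st] row_incr_bounds(1)[OF st] e]
    show ?thesis unfolding ratio_def rel_row_incr_def by (simp only:)
  qed
  then show "\<bar>ratio t i j - ratio s i j\<bar> \<le> 3 * (rel_row_incr s t i + rel_row_incr s t j)"
    and "ratio t i j - ratio s i j
           - ratio s i j * (2 * (t i j - s i j) / s i j - rel_row_incr s t i - rel_row_incr s t j)
         \<ge> -6 * ((rel_row_incr s t i)^2 + (rel_row_incr s t j)^2)"
    by auto
qed

lemma H_diff_sq_le:
  assumes s: "admissible s" and t: "admissible t" and st: "elementary_step s t"
  shows "(H t - H s)^2 \<le> 36 * coef_total^2 * rel_growth s t"
proof -
  have r: "rel_row_incr s t i \<le> sqrt (rel_growth s t)" for i
    using rel_row_incr_sq_le by (intro real_le_rsqrt) auto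
  have "\<bar>H t - H s\<bar> = \<bar>\<Sum>i\<in>UNIV. \<Sum>j\<in>UNIV. coef i j * (ratio t i j - ratio s i j)\<bar>"
    unfolding H_def by (simp only: sum_subtractf[symmetric] right_diff_distrib)
  also have "\<dots> \<le> (\<Sum>i\<in>UNIV. \<Sum>j\<in>UNIV. \<bar>coef i j * (ratio t i j - ratio s i j)\<bar>)"
    by (rule order.trans[OF sum_abs sum_mono]) (rule sum_abs)
  also have "\<dots> \<le> (\<Sum>i\<in>UNIV. \<Sum>j\<in>UNIV. coef i j * (6 * sqrt (rel_growth s t)))"
  proof (intro sum_mono)
    fix i j
    have "\<bar>ratio t i j - ratio s i j\<bar> \<le> 6 * sqrt (rel_growth s t)"
      using ratio_perturbation(1)[OF s t st, of i j] r[of i] r[of j] by argo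
    then show "\<bar>coef i j * (ratio t i j - ratio s i j)\<bar> \<le> coef i j * (6 * sqrt (rel_growth s t))"
      using coef_nonneg[of i j] by (simp add: abs_mult mult_left_mono)
  qed
  also have "\<dots> = coef_total * (6 * sqrt (rel_growth s t))"
    unfolding coef_total_def by (simp add: sum_distrib_right)
  finally have "\<bar>H t - H s\<bar>^2 \<le> (6 * coef_total * sqrt (rel_growth s t))^2"
    by (intro power_mono) (auto simp: mult_ac)
  then show ?thesis using rel_growth_nonneg by (simp add: power_mult_distrib)
qed

lemma H_second_order:
  assumes s: "admissible s" and t: "admissible t" and st: "elementary_step s t"
  shows "H t - H s - H_first_order s t \<ge> -12 * coef_total * rel_growth s t"
proof -
  have "H t - H s - H_first_order s t = (\<Sum>i\<in>UNIV. \<Sum>j\<in>UNIV. coef i j *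
      (ratio t i j - ratio s i j
       - ratio s i j * (2 * (t i j - s i j) / s i j - rel_row_incr s t i - rel_row_incr s t j)))"
    unfolding H_def H_first_order_def by (simp only: sum_subtractf[symmetric] right_diff_distrib mult.assoc)
  also have "\<dots> \<ge> (\<Sum>i\<in>UNIV. \<Sum>j\<in>UNIV. coef i j * (-12 * rel_growth s t))"
  proof (intro sum_mono mult_left_mono coef_nonneg)
    fix i j
    have "-12 * rel_growth s t \<le> -6 * ((rel_row_incr s t i)^2 + (rel_row_incr s t j)^2)"
      using rel_row_incr_sq_le[of s t i] rel_row_incr_sq_le[of s t j] by argo
    also have "\<dots> \<le> ratio t i j - ratio s i j
       - ratio s i j * (2 * (t i j - s i j) / s i j - rel_row_incr s t i - rel_row_incr s t j)"
      by (rule ratio_perturbation(2)[OF s t st])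
    finally show "-12 * rel_growth s t \<le> ratio t i j - ratio s i j
       - ratio s i j * (2 * (t i j - s i j) / s i j - rel_row_incr s t i - rel_row_incr s t j)" .
  qed
  also have "(\<Sum>i\<in>UNIV. \<Sum>j\<in>UNIV. coef i j * (-12 * rel_growth s t)) = -12 * coef_total * rel_growth s t"
    unfolding coef_total_def sum_distrib_right[symmetric] by (simp only: mult_ac)
  finally show ?thesis .
qed

end

section \<open>Drift and conditional variance\<close>

context reinforcement_model
begin

lemma E_step_const: "E_step s (\<lambda>_. k) = k"
  unfolding E_step_def by (simp add: sum_distrib_right[symmetric] sum_pmf_eq_1 finite_set_pmf_step)

lemma E_step_sum: "finite A \<Longrightarrow> E_step s (\<lambda>t. \<Sum>i\<in>A. f i t) = (\<Sum>i\<in>A. E_step s (f i))"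
  unfolding E_step_def by (simp add: sum_distrib_left) (rule sum.swap)

lemma E_step_add: "E_step s (\<lambda>t. f t + g t) = E_step s f + E_step s g"
  unfolding E_step_def by (simp add: distrib_left sum.distrib)

lemma E_step_diff: "E_step s (\<lambda>t. f t - g t) = E_step s f - E_step s g"
  unfolding E_step_def by (simp add: right_diff_distrib sum_subtractf)

lemma E_step_cmult: "E_step s (\<lambda>t. k * f t) = k * E_step s f"
  unfolding E_step_def by (simp add: sum_distrib_left mult_ac)

lemma E_step_mono: "(\<And>t. t \<in> set_pmf (step adj a pW s) \<Longrightarrow> f t \<le> g t) \<Longrightarrow> E_step s f \<le> E_step s g"
  unfolding E_step_def by (intro sum_mono mult_left_mono) auto

lemma E_step_cong: "(\<And>t. t \<in> set_pmf (step adj a pW s) \<Longrightarrow> f t = g t) \<Longrightarrow> E_step s f = E_step s g"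
  unfolding E_step_def by (intro sum.cong) auto

lemma E_step_rel_growth_nonneg: "0 \<le> E_step s (rel_growth s)"
  using E_step_mono[of s "\<lambda>_. 0" "rel_growth s"] E_step_const rel_growth_nonneg by metis

lemma E_step_entry: assumes s: "admissible s" shows "E_step s (\<lambda>t. t i j) = s i j + mean_incr s i j"
proof (cases "adj i j")
  case True
  have ji: "adj j i" "i \<noteq> j" using True adj_sym adj_irrefl by metis+
  have "E_step s (\<lambda>t. t i j)
      = s i j + a i j * pedge adj pW i j * ((s i j / vsum s i) * (s j i / vsum s j))"
    unfolding E_step_def sum_pmf_step
    by (rule expected_reinforced_entry)
      (use pW_nonneg pW_sum admissible_nonneg[OF s] admissible_vsum_pos[OF s True]
        admissible_vsum_pos[OF s ji(1)] True ji(2) in auto)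
  also have "s j i = s i j" using s unfolding admissible_def by metis
  finally show ?thesis unfolding mean_incr_def coef_def ratio_def by (simp add: power2_eq_square)
next
  case False
  then have "E_step s (\<lambda>t. t i j) = E_step s (\<lambda>_. s i j)"
    using elementary_step_step unfolding elementary_step_def by (intro E_step_cong) metis
  moreover have "s i j = 0" using s False unfolding admissible_def by auto
  ultimately show ?thesis by (simp add: E_step_const mean_incr_def ratio_def)
qed

lemma E_step_incr: "admissible s \<Longrightarrow> E_step s (\<lambda>t. t i j - s i j) = mean_incr s i j"
  by (simp add: E_step_diff E_step_const E_step_entry)

lemma E_step_row_incr:
  assumes "admissible s" shows "E_step s (\<lambda>t. row_incr s t i) = (\<Sum>j\<in>UNIV. mean_incr s i j)"
proof -
  have "E_step s (\<lambda>t. row_incr s t i) = E_step s (\<lambda>t. \<Sum>j\<in>UNIV. t i j - s i j)"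
    unfolding row_incr_def vsum_def by (simp add: sum_subtractf)
  also have "\<dots> = (\<Sum>j\<in>UNIV. mean_incr s i j)" by (simp add: E_step_sum E_step_incr[OF assms])
  finally show ?thesis .
qed

lemma mean_incr_sym: "admissible s \<Longrightarrow> mean_incr s i j = mean_incr s j i"
  unfolding mean_incr_def ratio_def admissible_def using coef_sym by (simp add: mult.commute)

lemma mean_incr_zero: "s i j = 0 \<Longrightarrow> mean_incr s i j = 0"
  unfolding mean_incr_def ratio_def by simp

lemma E_step_H_first_order:
  assumes s: "admissible s"
  defines "m \<equiv> mean_incr s" and "S \<equiv> \<lambda>i. \<Sum>j\<in>UNIV. mean_incr s i j"
  shows "E_step s (H_first_order s) =
           2 * (\<Sum>i\<in>UNIV. (\<Sum>j\<in>UNIV. (m i j)^2 / s i j) - (S i)^2 / vsum s i)"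
proof -
  have "H_first_order s = (\<lambda>t. \<Sum>i\<in>UNIV. \<Sum>j\<in>UNIV. 2 * (m i j / s i j) * (t i j - s i j)
          - (m i j / vsum s i) * row_incr s t i - (m i j / vsum s j) * row_incr s t j)"
    unfolding H_first_order_def m_def mean_incr_def rel_row_incr_def
    by (intro ext sum.cong refl) (simp add: algebra_simps)
  then have "E_step s (H_first_order s) = (\<Sum>i\<in>UNIV. \<Sum>j\<in>UNIV. 2 * (m i j / s i j) * m i j
          - (m i j / vsum s i) * S i - (m i j / vsum s j) * S j)"
    by (simp only: E_step_sum finite E_step_diff E_step_cmult E_step_const E_step_entry[OF s]
        add_diff_cancel_left' E_step_row_incr[OF s] m_def S_def)
  also have "\<dots> = (\<Sum>i\<in>UNIV. \<Sum>j\<in>UNIV. 2 * (m i j / s i j) * m i j)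
      - (\<Sum>i\<in>UNIV. \<Sum>j\<in>UNIV. m i j / vsum s i * S i)
      - (\<Sum>j\<in>UNIV. \<Sum>i\<in>UNIV. m i j / vsum s j * S j)"
    by (simp only: sum_subtractf sum.swap[of "\<lambda>i j. m i j / vsum s j * S j" UNIV UNIV])
  also have "\<dots> = (\<Sum>i\<in>UNIV. \<Sum>j\<in>UNIV. 2 * (m i j / s i j) * m i j)
      - (\<Sum>i\<in>UNIV. (S i)^2 / vsum s i) - (\<Sum>j\<in>UNIV. (S j)^2 / vsum s j)"
  proof -
    have "(\<Sum>j\<in>UNIV. m i j / vsum s i * S i) = (S i)^2 / vsum s i" for i
      by (simp add: S_def m_def sum_divide_distrib[symmetric] sum_distrib_right[symmetric]
          power2_eq_square)
    moreover have "(\<Sum>i\<in>UNIV. m i j / vsum s j * S j) = (S j)^2 / vsum s j" for j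
      using mean_incr_sym[OF s]
      by (simp add: S_def m_def sum_divide_distrib[symmetric] sum_distrib_right[symmetric]
          power2_eq_square)
    ultimately show ?thesis by simp
  qed
  finally show ?thesis by (simp add: sum_subtractf sum_distrib_left sum_negf power2_eq_square mult_ac)
qed

text \<open>The first-order drift is nonnegative: row by row this is the Cauchy-Schwarz inequality
  \<open>(\<Sum>\<^sub>j m\<^sub>i\<^sub>j)\<^sup>2 / (\<Sum>\<^sub>j s\<^sub>i\<^sub>j) \<le> \<Sum>\<^sub>j m\<^sub>i\<^sub>j\<^sup>2 / s\<^sub>i\<^sub>j\<close>.\<close>

lemma E_step_H_first_order_nonneg: assumes s: "admissible s" shows "0 \<le> E_step s (H_first_order s)"
proof -
  have "(\<Sum>j\<in>UNIV. mean_incr s i j)^2 / vsum s i \<le> (\<Sum>j\<in>UNIV. (mean_incr s i j)^2 / s i j)" for i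
    unfolding vsum_def by (rule sum_squared_div_sum_le) (auto simp: admissible_nonneg[OF s] mean_incr_zero)
  then show ?thesis unfolding E_step_H_first_order[OF s] by (simp add: sum_nonneg)
qed

lemma drift_lower_bound:
  assumes s: "admissible s" shows "-12 * coef_total * E_step s (rel_growth s) \<le> drift s"
proof -
  have "E_step s (\<lambda>t. H_first_order s t - 12 * coef_total * rel_growth s t) \<le> drift s"
    unfolding drift_def
  proof (intro E_step_mono)
    fix t assume t: "t \<in> set_pmf (step adj a pW s)"
    from H_second_order[OF s admissible_step[OF t s] elementary_step_step[OF t]]
    show "H_first_order s t - 12 * coef_total * rel_growth s t \<le> H t - H s" by linarith
  qed
  moreover have "E_step s (\<lambda>t. H_first_order s t - 12 * coef_total * rel_growth s t)
      = E_step s (H_first_order s) - 12 * coef_total * E_step s (rel_growth s)"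
    by (simp add: E_step_diff E_step_cmult mult.assoc)
  ultimately show ?thesis using E_step_H_first_order_nonneg[OF s] by linarith
qed

lemma E_step_centered_sq_le:
  assumes s: "admissible s"
  shows "E_step s (\<lambda>t. (H t - H s - drift s)^2) \<le> 36 * coef_total^2 * E_step s (rel_growth s)"
proof -
  have "E_step s (\<lambda>t. (H t - H s - drift s)^2)
      = E_step s (\<lambda>t. (H t - H s)^2 + (- (2 * drift s) * (H t - H s) + (drift s)^2))"
    by (intro E_step_cong) (simp add: power2_eq_square algebra_simps)
  also have "\<dots> = E_step s (\<lambda>t. (H t - H s)^2) - (drift s)^2"
    by (simp only: E_step_add E_step_cmult E_step_const drift_def[symmetric]) (simp add: power2_eq_square)
  also have "\<dots> \<le> E_step s (\<lambda>t. (H t - H s)^2)" by simp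
  also have "\<dots> \<le> E_step s (\<lambda>t. 36 * coef_total^2 * rel_growth s t)"
    using H_diff_sq_le[OF s admissible_step[OF _ s] elementary_step_step] by (intro E_step_mono) auto
  also have "\<dots> = 36 * coef_total^2 * E_step s (rel_growth s)" by (simp add: E_step_cmult)
  finally show ?thesis .
qed

text \<open>Row sums never decrease and grow by at most \<open>a_total\<close> per step.\<close>

lemma sum_rel_growth_le_budget:
  assumes start: "\<rho> 0 = v0"
    and steps: "\<And>k. k < n \<Longrightarrow> admissible (\<rho> k) \<and> elementary_step (\<rho> k) (\<rho> (Suc k))"
  shows "(\<Sum>k<n. rel_growth (\<rho> k) (\<rho> (Suc k))) \<le> growth_budget"
proof -
  have "(\<Sum>k<n. rel_growth (\<rho> k) (\<rho> (Suc k)))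
      = (\<Sum>i\<in>UNIV. \<Sum>k<n. ((vsum (\<rho> (Suc k)) i - vsum (\<rho> k) i) / vsum (\<rho> k) i)^2)"
    unfolding rel_growth_def rel_row_incr_def row_incr_def by (rule sum.swap)
  also have "\<dots> \<le> growth_budget" unfolding growth_budget_def
  proof (intro sum_mono)
    fix i
    show "(\<Sum>k<n. ((vsum (\<rho> (Suc k)) i - vsum (\<rho> k) i) / vsum (\<rho> k) i)^2)
        \<le> (if 0 < vsum v0 i then (a_total + a_total^2 / vsum v0 i) / vsum v0 i else 0)"
    proof (cases "0 < vsum v0 i")
      case True
      have "0 \<le> a_total" unfolding a_total_def using a_nonneg by (simp add: sum_nonneg)
      moreover have "vsum (\<rho> k) i \<le> vsum (\<rho> (Suc k)) i \<and> vsum (\<rho> (Suc k)) i \<le> vsum (\<rho> k) i + a_total"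
        if "k < n" for k
        using row_incr_bounds[of "\<rho> k" "\<rho> (Suc k)" i] steps[OF that] unfolding row_incr_def by auto
      ultimately have "(\<Sum>k<n. ((vsum (\<rho> (Suc k)) i - vsum (\<rho> k) i) / vsum (\<rho> k) i)^2)
          \<le> (a_total + a_total^2 / vsum (\<rho> 0) i) / vsum (\<rho> 0) i"
        using True start by (intro sum_sq_rel_increments_le) auto
      then show ?thesis using True start by simp
    next
      case False
      have "v0 i j \<le> vsum v0 i" for j unfolding vsum_def using v0_nonneg by (intro member_le_sum) auto
      then have "\<not> adj i j" for j using False v0_pos[of i j] by (meson less_le_trans)
      moreover have "\<forall>i j. \<not> adj i j \<longrightarrow> \<rho> k i j = 0" if "k < n" for k
        using steps[OF that] unfolding admissible_def by blast
      ultimately have "vsum (\<rho> k) i = 0" if "k < n" for k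
        using that unfolding vsum_def by simp
      then show ?thesis using False by simp
    qed
  qed
  finally show ?thesis .
qed

end

section \<open>Expectations over histories\<close>

locale reinforcement_process = reinforcement_model adj a pW v0
  for adj :: "'v::finite \<Rightarrow> 'v \<Rightarrow> bool" and a pW v0 +
  fixes M :: "'w measure"
    and V :: "nat \<Rightarrow> 'w \<Rightarrow> ('v \<Rightarrow> 'v \<Rightarrow> real)"
  assumes M: "prob_space M"
    and V_meas: "\<And>n s. {\<omega> \<in> space M. V n \<omega> = s} \<in> sets M"
    and V_init: "measure M {\<omega> \<in> space M. V 0 \<omega> = v0} = 1"
    and V_markov: "\<And>n (s :: nat \<Rightarrow> ('v \<Rightarrow> 'v \<Rightarrow> real)) t.
        measure M {\<omega> \<in> space M. (\<forall>k\<le>n. V k \<omega> = s k) \<and> V (Suc n) \<omega> = t}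
        = measure M {\<omega> \<in> space M. \<forall>k\<le>n. V k \<omega> = s k} * pmf (step adj a pW (s n)) t"
begin

text \<open>The hypotheses only describe the law of the process through the probabilities of
  cylinders, so all expectations are finite sums over the possible histories up to time \<open>n\<close>.
  A history is a function on all times, frozen at \<open>v0\<close> after time \<open>n\<close>.\<close>

primrec paths :: "nat \<Rightarrow> (nat \<Rightarrow> 'v \<Rightarrow> 'v \<Rightarrow> real) set" where
  "paths 0 = {\<lambda>_. v0}"
| "paths (Suc n) = (\<lambda>(h, t). h(Suc n := t)) ` (SIGMA h:paths n. set_pmf (step adj a pW (h n)))"

declare paths.simps(2)[simp del]

definition cylinder :: "nat \<Rightarrow> (nat \<Rightarrow> 'v \<Rightarrow> 'v \<Rightarrow> real) \<Rightarrow> 'w set" where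
  "cylinder n h = {\<omega> \<in> space M. \<forall>k\<le>n. V k \<omega> = h k}"

definition path_prob :: "nat \<Rightarrow> (nat \<Rightarrow> 'v \<Rightarrow> 'v \<Rightarrow> real) \<Rightarrow> real" where
  "path_prob n h = measure M (cylinder n h)"

definition E_path :: "nat \<Rightarrow> ((nat \<Rightarrow> 'v \<Rightarrow> 'v \<Rightarrow> real) \<Rightarrow> real) \<Rightarrow> real" where
  "E_path n G = (\<Sum>h\<in>paths n. path_prob n h * G h)"

definition depends_upto :: "nat \<Rightarrow> ((nat \<Rightarrow> 'v \<Rightarrow> 'v \<Rightarrow> real) \<Rightarrow> real) \<Rightarrow> bool" where
  "depends_upto n G \<longleftrightarrow> (\<forall>h h'. (\<forall>k\<le>n. h k = h' k) \<longrightarrow> G h = G h')"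

lemma finite_paths: "finite (paths n)"
  by (induction n) (auto simp: paths.simps intro!: finite_SigmaI finite_set_pmf_step)

lemma mem_pathsD:
  assumes "h \<in> paths n"
  shows "h 0 = v0" and "\<And>k. n < k \<Longrightarrow> h k = v0"
    and "\<And>k. k < n \<Longrightarrow> h (Suc k) \<in> set_pmf (step adj a pW (h k))"
proof -
  have "h 0 = v0 \<and> (\<forall>k>n. h k = v0) \<and> (\<forall>k<n. h (Suc k) \<in> set_pmf (step adj a pW (h k)))"
    using assms
  proof (induction n arbitrary: h)
    case (Suc n)
    from Suc.prems obtain x where x: "x \<in> (SIGMA h:paths n. set_pmf (step adj a pW (h n)))"
      "h = (\<lambda>(h, t). h(Suc n := t)) x"
      unfolding paths.simps by (rule imageE)
    then obtain g t where g: "g \<in> paths n" "t \<in> set_pmf (step adj a pW (g n))" "h = g(Suc n := t)"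
      by (cases x) auto
    have IH: "g 0 = v0" "\<forall>k>n. g k = v0" "\<forall>k<n. g (Suc k) \<in> set_pmf (step adj a pW (g k))"
      using Suc.IH[OF g(1)] by auto
    show ?case
    proof (intro conjI allI impI)
      fix k
      show "h 0 = v0" "Suc n < k \<Longrightarrow> h k = v0" using IH g by simp_all
      assume "k < Suc n"
      then show "h (Suc k) \<in> set_pmf (step adj a pW (h k))"
        using IH g by (cases "k = n") simp_all
    qed
  qed auto
  then show "h 0 = v0" "\<And>k. n < k \<Longrightarrow> h k = v0"
    "\<And>k. k < n \<Longrightarrow> h (Suc k) \<in> set_pmf (step adj a pW (h k))"
    by auto
qed

lemma admissible_paths: "h \<in> paths n \<Longrightarrow> admissible (h k)"
proof (induction k)
  case 0
  then show ?case using mem_pathsD(1) admissible_v0 by simp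
next
  case (Suc k)
  show ?case
  proof (cases "k < n")
    case True
    then show ?thesis using mem_pathsD(3)[OF Suc.prems True] admissible_step Suc by blast
  next
    case False
    then show ?thesis using mem_pathsD(2)[OF Suc.prems, of "Suc k"] admissible_v0 by simp
  qed
qed

lemma cylinder_sets: "cylinder n h \<in> sets M"
proof (induction n)
  case 0
  have "cylinder 0 h = {\<omega> \<in> space M. V 0 \<omega> = h 0}" unfolding cylinder_def by auto
  then show ?case using V_meas by simp
next
  case (Suc n)
  have "cylinder (Suc n) h = cylinder n h \<inter> {\<omega> \<in> space M. V (Suc n) \<omega> = h (Suc n)}"
    unfolding cylinder_def using le_Suc_eq by auto
  then show ?case using Suc V_meas by auto
qed

lemma path_prob_nonneg: "0 \<le> path_prob n h"
  unfolding path_prob_def by simp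

lemma path_prob_extend: "path_prob (Suc n) (h(Suc n := t)) = path_prob n h * pmf (step adj a pW (h n)) t"
proof -
  have "cylinder (Suc n) (h(Suc n := t)) = {\<omega> \<in> space M. (\<forall>k\<le>n. V k \<omega> = h k) \<and> V (Suc n) \<omega> = t}"
    unfolding cylinder_def using le_Suc_eq by auto
  then show ?thesis unfolding path_prob_def cylinder_def[of n] using V_markov by simp
qed

lemma inj_on_extend:
  "inj_on (\<lambda>(h, t). h(Suc n := t)) (SIGMA h:paths n. set_pmf (step adj a pW (h n)))"
proof (rule inj_onI, clarsimp)
  fix h t h' t'
  assume h: "h \<in> paths n" "h' \<in> paths n" and e: "h(Suc n := t) = h'(Suc n := t')"
  have "h k = h' k" for k
    using fun_cong[OF e, of k] mem_pathsD(2)[OF h(1), of "Suc n"] mem_pathsD(2)[OF h(2), of "Suc n"]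
    by (cases "k = Suc n") auto
  then show "h = h' \<and> t = t'" using fun_cong[OF e, of "Suc n"] by auto
qed

lemma E_path_Suc: "E_path (Suc n) G = E_path n (\<lambda>h. E_step (h n) (\<lambda>t. G (h(Suc n := t))))"
proof -
  let ?ext = "\<lambda>(h, t). h(Suc n := t)"
  let ?S = "SIGMA h:paths n. set_pmf (step adj a pW (h n))"
  have "E_path (Suc n) G = (\<Sum>x\<in>?S. path_prob (Suc n) (?ext x) * G (?ext x))"
    unfolding E_path_def paths.simps by (rule sum.reindex[OF inj_on_extend, unfolded comp_def])
  also have "\<dots> = (\<Sum>(h, t)\<in>?S. path_prob n h * pmf (step adj a pW (h n)) t * G (h(Suc n := t)))"
    by (intro sum.cong refl) (auto simp: path_prob_extend)
  also have "\<dots> = (\<Sum>h\<in>paths n. \<Sum>t\<in>set_pmf (step adj a pW (h n)).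
                    path_prob n h * pmf (step adj a pW (h n)) t * G (h(Suc n := t)))"
    by (rule sum.Sigma[symmetric]) (auto simp: finite_paths finite_set_pmf_step)
  also have "\<dots> = E_path n (\<lambda>h. E_step (h n) (\<lambda>t. G (h(Suc n := t))))"
    unfolding E_path_def E_step_def by (simp add: sum_distrib_left mult.assoc)
  finally show ?thesis .
qed

lemma E_path_const: "E_path n (\<lambda>_. c) = c"
proof (induction n)
  case 0
  have "cylinder 0 (\<lambda>_. v0) = {\<omega> \<in> space M. V 0 \<omega> = v0}" unfolding cylinder_def by auto
  then show ?case unfolding E_path_def path_prob_def using V_init by simp
next
  case (Suc n)
  then show ?case by (simp add: E_path_Suc E_step_const)
qed

lemma depends_upto_mono: "depends_upto n G \<Longrightarrow> n \<le> m \<Longrightarrow> depends_upto m G"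
  unfolding depends_upto_def by (meson order_trans)

lemma depends_upto_mult:
  "depends_upto n f \<Longrightarrow> depends_upto n g \<Longrightarrow> depends_upto n (\<lambda>h. f h * g h)"
  unfolding depends_upto_def by metis

lemma depends_upto_power2: "depends_upto n f \<Longrightarrow> depends_upto n (\<lambda>h. (f h)^2)"
  unfolding depends_upto_def by metis

lemma E_path_Suc_depends: assumes "depends_upto n G" shows "E_path (Suc n) G = E_path n G"
proof -
  have "G (h(Suc n := t)) = G h" for h t using assms unfolding depends_upto_def by auto
  then show ?thesis by (simp add: E_path_Suc E_step_const)
qed

lemma E_path_depends: "depends_upto n G \<Longrightarrow> n \<le> m \<Longrightarrow> E_path m G = E_path n G"
proof (induction m)
  case (Suc m)
  show ?case
  proof (cases "n = Suc m")
    case False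
    then have nm: "n \<le> m" using Suc.prems by simp
    have "E_path (Suc m) G = E_path m G"
      by (rule E_path_Suc_depends[OF depends_upto_mono[OF Suc.prems(1) nm]])
    also have "\<dots> = E_path n G" by (rule Suc.IH[OF Suc.prems(1) nm])
    finally show ?thesis .
  qed simp
qed simp

lemma E_path_add: "E_path n (\<lambda>h. f h + g h) = E_path n f + E_path n g"
  unfolding E_path_def by (simp add: distrib_left sum.distrib)

lemma E_path_cmult: "E_path n (\<lambda>h. c * f h) = c * E_path n f"
  unfolding E_path_def by (simp add: sum_distrib_left mult_ac)

lemma E_path_sum: "finite A \<Longrightarrow> E_path n (\<lambda>h. \<Sum>i\<in>A. f i h) = (\<Sum>i\<in>A. E_path n (f i))"
  unfolding E_path_def by (simp add: sum_distrib_left) (rule sum.swap)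

lemma E_path_mono: "(\<And>h. h \<in> paths n \<Longrightarrow> f h \<le> g h) \<Longrightarrow> E_path n f \<le> E_path n g"
  unfolding E_path_def using path_prob_nonneg by (intro sum_mono mult_left_mono) auto

lemma E_path_cong: "(\<And>h. h \<in> paths n \<Longrightarrow> f h = g h) \<Longrightarrow> E_path n f = E_path n g"
  unfolding E_path_def by (intro sum.cong) auto

lemma E_path_nonneg: "(\<And>h. h \<in> paths n \<Longrightarrow> 0 \<le> f h) \<Longrightarrow> 0 \<le> E_path n f"
  using E_path_mono[of n "\<lambda>_. 0" f] by (simp add: E_path_def)

end

section \<open>Martingale estimates\<close>

context reinforcement_process
begin

definition mart_incr :: "nat \<Rightarrow> (nat \<Rightarrow> 'v \<Rightarrow> 'v \<Rightarrow> real) \<Rightarrow> real" where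
  "mart_incr k h = H (h (Suc k)) - H (h k) - drift (h k)"

definition mart_sum :: "nat \<Rightarrow> nat \<Rightarrow> (nat \<Rightarrow> 'v \<Rightarrow> 'v \<Rightarrow> real) \<Rightarrow> real" where
  "mart_sum m j h = (\<Sum>k\<in>{m..<j}. mart_incr k h)"

definition growth :: "nat \<Rightarrow> (nat \<Rightarrow> 'v \<Rightarrow> 'v \<Rightarrow> real) \<Rightarrow> real" where
  "growth k h = rel_growth (h k) (h (Suc k))"

definition expected_growth :: "nat \<Rightarrow> real" where
  "expected_growth n = E_path n (\<lambda>h. \<Sum>k<n. growth k h)"

definition compensator :: "nat \<Rightarrow> (nat \<Rightarrow> 'v \<Rightarrow> 'v \<Rightarrow> real) \<Rightarrow> real" where
  "compensator n h = (\<Sum>k<n. E_step (h k) (rel_growth (h k)))"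

definition exceeds :: "nat \<Rightarrow> real \<Rightarrow> nat \<Rightarrow> (nat \<Rightarrow> 'v \<Rightarrow> 'v \<Rightarrow> real) \<Rightarrow> real" where
  "exceeds m \<epsilon> K h = (if \<exists>j\<in>{m..K}. \<epsilon> \<le> \<bar>mart_sum m j h\<bar> then 1 else 0)"

lemma depends_upto_growth: "depends_upto (Suc k) (growth k)"
  unfolding depends_upto_def growth_def by auto

lemma depends_upto_sum_growth: "depends_upto n (\<lambda>h. \<Sum>k<n. growth k h)"
  unfolding depends_upto_def growth_def by (auto intro!: sum.cong simp: Suc_le_eq)

lemma depends_upto_mart_sum: "depends_upto j (mart_sum m j)"
  unfolding depends_upto_def mart_sum_def mart_incr_def by (auto intro!: sum.cong simp: Suc_le_eq)

lemma depends_upto_exceeds: "depends_upto K (exceeds m \<epsilon> K)"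
  unfolding depends_upto_def
proof (intro allI impI)
  fix h h' :: "nat \<Rightarrow> 'v \<Rightarrow> 'v \<Rightarrow> real"
  assume "\<forall>k\<le>K. h k = h' k"
  then have "mart_sum m j h = mart_sum m j h'" if "j \<le> K" for j
    using depends_upto_mart_sum[of j m] that unfolding depends_upto_def by auto
  then show "exceeds m \<epsilon> K h = exceeds m \<epsilon> K h'" unfolding exceeds_def by auto
qed

lemma exceeds_bounds: "0 \<le> exceeds m \<epsilon> K h" "exceeds m \<epsilon> K h \<le> 1"
  unfolding exceeds_def by auto

lemma compensator_nonneg: "0 \<le> compensator n h"
  unfolding compensator_def by (intro sum_nonneg E_step_rel_growth_nonneg)

lemma compensator_mono: "m \<le> n \<Longrightarrow> compensator m h \<le> compensator n h"
  unfolding compensator_def using E_step_rel_growth_nonneg by (intro sum_mono2) auto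

lemma E_path_mart_incr: assumes "depends_upto k G" shows "E_path (Suc k) (\<lambda>h. G h * mart_incr k h) = 0"
proof -
  have "E_step (h k) (\<lambda>t. G (h(Suc k := t)) * mart_incr k (h(Suc k := t))) = 0" for h
  proof -
    have "E_step (h k) (\<lambda>t. G (h(Suc k := t)) * mart_incr k (h(Suc k := t)))
        = E_step (h k) (\<lambda>t. G h * ((H t - H (h k)) - drift (h k)))"
      using assms unfolding depends_upto_def mart_incr_def by (intro E_step_cong) auto
    also have "\<dots> = G h * (E_step (h k) (\<lambda>t. H t - H (h k)) - drift (h k))"
      by (simp only: E_step_cmult E_step_diff[of _ "\<lambda>t. H t - H (h k)"] E_step_const)
    finally show ?thesis by (simp add: drift_def)
  qed
  then show ?thesis by (simp only: E_path_Suc) (simp add: E_path_def)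
qed

lemma E_path_mart_incr_sq:
  "E_path (Suc k) (\<lambda>h. (mart_incr k h)^2) \<le> 36 * coef_total^2 * E_path (Suc k) (growth k)"
proof -
  have "E_path (Suc k) (\<lambda>h. (mart_incr k h)^2)
      = E_path k (\<lambda>h. E_step (h k) (\<lambda>t. (H t - H (h k) - drift (h k))^2))"
    unfolding E_path_Suc mart_incr_def by simp
  also have "\<dots> \<le> E_path k (\<lambda>h. 36 * coef_total^2 * E_step (h k) (rel_growth (h k)))"
    by (intro E_path_mono E_step_centered_sq_le admissible_paths)
  also have "\<dots> = 36 * coef_total^2 * E_path (Suc k) (growth k)"
    unfolding E_path_Suc growth_def E_path_cmult by simp
  finally show ?thesis .
qed

lemma expected_growth_le_budget: "expected_growth n \<le> growth_budget"
proof -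
  have "expected_growth n \<le> E_path n (\<lambda>_. growth_budget)"
    unfolding expected_growth_def growth_def
    by (intro E_path_mono sum_rel_growth_le_budget)
      (auto intro: mem_pathsD admissible_paths elementary_step_step)
  then show ?thesis by (simp add: E_path_const)
qed

lemma expected_growth_Suc: "expected_growth (Suc n) = expected_growth n + E_path (Suc n) (growth n)"
proof -
  have "expected_growth (Suc n) = E_path (Suc n) (\<lambda>h. \<Sum>k<n. growth k h) + E_path (Suc n) (growth n)"
    unfolding expected_growth_def by (simp add: E_path_add)
  then show ?thesis
    unfolding expected_growth_def by (simp add: E_path_Suc_depends[OF depends_upto_sum_growth])
qed

lemma incseq_expected_growth: "incseq expected_growth"
proof (rule incseq_SucI)
  fix n
  have "0 \<le> E_path (Suc n) (growth n)"
    unfolding growth_def by (intro E_path_nonneg rel_growth_nonneg)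
  then show "expected_growth n \<le> expected_growth (Suc n)" by (simp add: expected_growth_Suc)
qed

lemma E_path_compensator: "E_path n (compensator n) = expected_growth n"
proof -
  have "E_path n (\<lambda>h. E_step (h k) (rel_growth (h k))) = E_path n (growth k)" if "k < n" for k
  proof -
    have "E_path n (\<lambda>h. E_step (h k) (rel_growth (h k))) = E_path k (\<lambda>h. E_step (h k) (rel_growth (h k)))"
      by (rule E_path_depends) (use that in \<open>auto simp: depends_upto_def\<close>)
    also have "\<dots> = E_path (Suc k) (growth k)" unfolding E_path_Suc growth_def by simp
    also have "\<dots> = E_path n (growth k)"
      by (rule E_path_depends[symmetric]) (use that depends_upto_growth in auto)
    finally show ?thesis .
  qed
  then show ?thesis unfolding compensator_def expected_growth_def by (simp add: E_path_sum)
qed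

lemma markov_compensator:
  assumes "0 < l" shows "E_path n (\<lambda>h. if l \<le> compensator n h then 1 else 0) \<le> growth_budget / l"
proof -
  have "l * E_path n (\<lambda>h. if l \<le> compensator n h then 1 else 0)
      = E_path n (\<lambda>h. l * (if l \<le> compensator n h then 1 else 0))"
    by (simp add: E_path_cmult)
  also have "\<dots> \<le> E_path n (compensator n)"
    by (intro E_path_mono) (auto simp: compensator_nonneg)
  also have "\<dots> \<le> growth_budget"
    using E_path_compensator expected_growth_le_budget by simp
  finally show ?thesis using assms by (simp add: field_simps)
qed

lemma E_path_mart_sum_sq:
  "m \<le> K \<Longrightarrow> E_path K (\<lambda>h. (mart_sum m K h)^2)
                \<le> 36 * coef_total^2 * (expected_growth K - expected_growth m)"
proof (induction K rule: dec_induct)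
  case base
  then show ?case by (simp add: mart_sum_def E_path_def)
next
  case (step K)
  have "E_path (Suc K) (\<lambda>h. (mart_sum m (Suc K) h)^2)
      = E_path (Suc K) (\<lambda>h. (mart_sum m K h)^2 + 2 * (mart_sum m K h * mart_incr K h) + (mart_incr K h)^2)"
    using step(1) by (intro E_path_cong) (simp add: mart_sum_def power2_eq_square algebra_simps)
  also have "\<dots> = E_path (Suc K) (\<lambda>h. (mart_sum m K h)^2)
      + 2 * E_path (Suc K) (\<lambda>h. mart_sum m K h * mart_incr K h) + E_path (Suc K) (\<lambda>h. (mart_incr K h)^2)"
    by (simp add: E_path_add E_path_cmult)
  also have "E_path (Suc K) (\<lambda>h. mart_sum m K h * mart_incr K h) = 0"
    by (rule E_path_mart_incr[OF depends_upto_mart_sum])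
  also have "E_path (Suc K) (\<lambda>h. (mart_sum m K h)^2) = E_path K (\<lambda>h. (mart_sum m K h)^2)"
    by (rule E_path_Suc_depends[OF depends_upto_power2[OF depends_upto_mart_sum]])
  finally show ?case
    using step(3) E_path_mart_incr_sq[of K] expected_growth_Suc[of K] by (simp add: algebra_simps)
qed

lemma E_path_mart_sum_sq_exceeds:
  "E_path K (\<lambda>h. (mart_sum m K h)^2 * exceeds m \<epsilon> K h)
     \<le> E_path (Suc K) (\<lambda>h. (mart_sum m (Suc K) h)^2 * exceeds m \<epsilon> K h)" if "m \<le> K"
proof -
  have "E_path (Suc K) (\<lambda>h. (mart_sum m (Suc K) h)^2 * exceeds m \<epsilon> K h) =
      E_path (Suc K) (\<lambda>h. (mart_sum m K h)^2 * exceeds m \<epsilon> K h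
        + 2 * ((mart_sum m K h * exceeds m \<epsilon> K h) * mart_incr K h) + (mart_incr K h)^2 * exceeds m \<epsilon> K h)"
    using that by (intro E_path_cong) (simp add: mart_sum_def power2_eq_square algebra_simps)
  also have "\<dots> = E_path (Suc K) (\<lambda>h. (mart_sum m K h)^2 * exceeds m \<epsilon> K h)
      + 2 * E_path (Suc K) (\<lambda>h. (mart_sum m K h * exceeds m \<epsilon> K h) * mart_incr K h)
      + E_path (Suc K) (\<lambda>h. (mart_incr K h)^2 * exceeds m \<epsilon> K h)"
    by (simp add: E_path_add E_path_cmult)
  also have "E_path (Suc K) (\<lambda>h. (mart_sum m K h * exceeds m \<epsilon> K h) * mart_incr K h) = 0"
    by (rule E_path_mart_incr[OF depends_upto_mult[OF depends_upto_mart_sum depends_upto_exceeds]])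
  also have "E_path (Suc K) (\<lambda>h. (mart_sum m K h)^2 * exceeds m \<epsilon> K h)
      = E_path K (\<lambda>h. (mart_sum m K h)^2 * exceeds m \<epsilon> K h)"
    by (rule E_path_Suc_depends[OF depends_upto_mult[OF depends_upto_power2[OF depends_upto_mart_sum]
          depends_upto_exceeds]])
  finally show ?thesis
    using E_path_nonneg[of "Suc K" "\<lambda>h. (mart_incr K h)^2 * exceeds m \<epsilon> K h"] exceeds_bounds by simp
qed

lemma exceedance_le_mart_sum_sq:
  assumes "0 < \<epsilon>"
  shows "m \<le> K \<Longrightarrow> \<epsilon>^2 * E_path K (exceeds m \<epsilon> K) \<le> E_path K (\<lambda>h. (mart_sum m K h)^2 * exceeds m \<epsilon> K h)"
proof (induction K rule: dec_induct)
  case base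
  have "exceeds m \<epsilon> m h = 0" for h using assms by (simp add: exceeds_def mart_sum_def)
  then show ?case by (simp add: E_path_def)
next
  case (step K)
  let ?Q = "exceeds m \<epsilon> K"
  define I where "I h = (if \<epsilon> \<le> \<bar>mart_sum m (Suc K) h\<bar> then 1 else (0::real))" for h
  have Q_Suc: "exceeds m \<epsilon> (Suc K) h = ?Q h + (1 - ?Q h) * I h" for h
    using step(1) by (auto simp: exceeds_def I_def le_Suc_eq)
  have first_exceedance: "(mart_sum m (Suc K) h)^2 * ?Q h + \<epsilon>^2 * ((1 - ?Q h) * I h)
      \<le> (mart_sum m (Suc K) h)^2 * exceeds m \<epsilon> (Suc K) h" for h
  proof -
    have "\<epsilon>^2 \<le> (mart_sum m (Suc K) h)^2" if "\<epsilon> \<le> \<bar>mart_sum m (Suc K) h\<bar>"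
      using power_mono[OF that, of 2] assms by simp
    then have "\<epsilon>^2 * I h \<le> (mart_sum m (Suc K) h)^2 * I h" by (simp add: I_def)
    then have "\<epsilon>^2 * I h * (1 - ?Q h) \<le> (mart_sum m (Suc K) h)^2 * I h * (1 - ?Q h)"
      by (rule mult_right_mono) (use exceeds_bounds[of m \<epsilon> K h] in auto)
    then show ?thesis unfolding Q_Suc by (simp add: algebra_simps)
  qed
  have "\<epsilon>^2 * E_path (Suc K) (exceeds m \<epsilon> (Suc K))
      = \<epsilon>^2 * E_path (Suc K) ?Q + E_path (Suc K) (\<lambda>h. \<epsilon>^2 * ((1 - ?Q h) * I h))"
    unfolding Q_Suc E_path_add E_path_cmult by (simp add: algebra_simps)
  also have "E_path (Suc K) ?Q = E_path K ?Q" by (rule E_path_Suc_depends[OF depends_upto_exceeds])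
  also have "\<epsilon>^2 * E_path K ?Q + E_path (Suc K) (\<lambda>h. \<epsilon>^2 * ((1 - ?Q h) * I h))
      \<le> E_path (Suc K) (\<lambda>h. (mart_sum m (Suc K) h)^2 * ?Q h) + E_path (Suc K) (\<lambda>h. \<epsilon>^2 * ((1 - ?Q h) * I h))"
    using order_trans[OF step(3) E_path_mart_sum_sq_exceeds[OF step(1), of \<epsilon>]] by simp
  also have "\<dots> \<le> E_path (Suc K) (\<lambda>h. (mart_sum m (Suc K) h)^2 * exceeds m \<epsilon> (Suc K) h)"
    unfolding E_path_add[symmetric] by (intro E_path_mono first_exceedance)
  finally show ?case .
qed

lemma kolmogorov_maximal:
  assumes "0 < \<epsilon>" "m \<le> K"
  shows "\<epsilon>^2 * E_path K (exceeds m \<epsilon> K) \<le> 36 * coef_total^2 * (expected_growth K - expected_growth m)"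
proof -
  have "\<epsilon>^2 * E_path K (exceeds m \<epsilon> K) \<le> E_path K (\<lambda>h. (mart_sum m K h)^2 * exceeds m \<epsilon> K h)"
    by (rule exceedance_le_mart_sum_sq[OF assms])
  also have "\<dots> \<le> E_path K (\<lambda>h. (mart_sum m K h)^2)"
    using exceeds_bounds by (intro E_path_mono) (simp add: mult_left_le)
  also have "\<dots> \<le> 36 * coef_total^2 * (expected_growth K - expected_growth m)"
    by (rule E_path_mart_sum_sq[OF assms(2)])
  finally show ?thesis .
qed

end

section \<open>Almost sure convergence\<close>

context reinforcement_process
begin

lemma convergent_mart_sum:
  assumes "\<And>\<epsilon>. 0 < \<epsilon> \<Longrightarrow> \<exists>m. \<forall>j\<ge>m. \<bar>mart_sum m j \<rho>\<bar> < \<epsilon>"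
  shows "convergent (\<lambda>n. mart_sum 0 n \<rho>)"
proof -
  have split: "mart_sum 0 j \<rho> = mart_sum 0 m \<rho> + mart_sum m j \<rho>" if "m \<le> j" for m j
    unfolding mart_sum_def using that by (simp add: sum.atLeastLessThan_concat)
  have "Cauchy (\<lambda>n. mart_sum 0 n \<rho>)"
  proof (rule CauchyI)
    fix e :: real assume "0 < e"
    then obtain m where m: "\<forall>j\<ge>m. \<bar>mart_sum m j \<rho>\<bar> < e/2" using assms[of "e/2"] by auto
    have "norm (mart_sum 0 j \<rho> - mart_sum 0 k \<rho>) < e" if "m \<le> j" "m \<le> k" for j k
    proof -
      have "\<bar>mart_sum m j \<rho>\<bar> < e/2" "\<bar>mart_sum m k \<rho>\<bar> < e/2" using m that by auto
      then show ?thesis using split[OF that(1)] split[OF that(2)] by simp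
    qed
    then show "\<exists>M. \<forall>j\<ge>M. \<forall>k\<ge>M. norm (mart_sum 0 j \<rho> - mart_sum 0 k \<rho>) < e" by blast
  qed
  then show ?thesis by (simp add: Cauchy_convergent_iff)
qed

text \<open>Along a trajectory, \<open>H\<close> is its starting value plus a martingale part plus the accumulated
  drift. The drift exceeds \<open>-12 coef_total\<close> times the compensator, so it is an increasing
  sequence minus a bounded increasing one; boundedness of \<open>H\<close> then bounds the increasing part.\<close>

lemma convergent_H_trajectory:
  assumes adm: "\<And>k. admissible (\<rho> k)"
    and small_osc: "\<And>\<epsilon>. 0 < \<epsilon> \<Longrightarrow> \<exists>m. \<forall>j\<ge>m. \<bar>mart_sum m j \<rho>\<bar> < \<epsilon>"
    and bounded: "\<And>n. compensator n \<rho> \<le> l"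
  shows "convergent (\<lambda>n. H (\<rho> n))"
proof -
  define N where "N n = mart_sum 0 n \<rho>" for n
  define b where "b n = 12 * coef_total * compensator n \<rho>" for n
  define P where "P n = H (\<rho> n) - H (\<rho> 0) - N n + b n" for n
  have cN: "convergent N" unfolding N_def by (rule convergent_mart_sum[OF small_osc])
  then obtain KN where KN: "\<And>n. \<bar>N n\<bar> \<le> KN" using convergent_imp_Bseq Bseq_def by (metis real_norm_def)
  have P_eq: "P n = (\<Sum>k<n. drift (\<rho> k) + 12 * coef_total * E_step (\<rho> k) (rel_growth (\<rho> k)))" for n
  proof (induction n)
    case (Suc n)
    then show ?case
      by (simp add: P_def N_def b_def mart_sum_def compensator_def mart_incr_def algebra_simps)
  qed (simp add: P_def N_def b_def mart_sum_def compensator_def)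
  have b_bound: "b n \<le> 12 * coef_total * l" for n
    unfolding b_def using bounded coef_total_nonneg by (simp add: mult_left_mono)
  have "incseq b"
    unfolding b_def using compensator_mono coef_total_nonneg by (auto intro!: mult_left_mono simp: incseq_def)
  then have cb: "convergent b" using b_bound by (rule convergent_bounded_incseq)
  have "incseq P"
  proof (rule incseq_SucI)
    show "P n \<le> P (Suc n)" for n unfolding P_eq using drift_lower_bound[OF adm, of n] by simp
  qed
  moreover have "P n \<le> coef_total + KN + 12 * coef_total * l" for n
    using H_bounds[OF adm, of n] H_bounds[OF adm, of 0] KN[of n] b_bound[of n] unfolding P_def by linarith
  ultimately have cP: "convergent P" by (rule convergent_bounded_incseq)
  have "(\<lambda>n. H (\<rho> n)) = (\<lambda>n. H (\<rho> 0) + N n + P n - b n)" unfolding P_def by auto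
  then show ?thesis by (simp add: convergent_add convergent_diff convergent_const cN cP cb)
qed

interpretation P: prob_space M by (rule M)

definition history :: "nat \<Rightarrow> 'w \<Rightarrow> (nat \<Rightarrow> 'v \<Rightarrow> 'v \<Rightarrow> real)" where
  "history n \<omega> = (\<lambda>k. if k \<le> n then V k \<omega> else v0)"

definition path_event :: "nat \<Rightarrow> ((nat \<Rightarrow> 'v \<Rightarrow> 'v \<Rightarrow> real) \<Rightarrow> bool) \<Rightarrow> 'w set" where
  "path_event n P = (\<Union>h\<in>{h \<in> paths n. P h}. cylinder n h)"

definition regular :: "'w set" where
  "regular = {\<omega> \<in> space M. \<forall>n. history n \<omega> \<in> paths n}"

lemma path_event_sets: "path_event n P \<in> sets M"
  unfolding path_event_def using finite_paths cylinder_sets by (intro sets.finite_UN) auto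

lemma mem_path_event_iff:
  "\<omega> \<in> path_event n P \<longleftrightarrow> \<omega> \<in> space M \<and> history n \<omega> \<in> paths n \<and> P (history n \<omega>)"
proof
  assume "\<omega> \<in> path_event n P"
  then obtain h where h: "h \<in> paths n" "P h" "\<omega> \<in> cylinder n h" unfolding path_event_def by auto
  then have "h = history n \<omega>"
    using mem_pathsD(2)[OF h(1)] unfolding cylinder_def history_def by (auto simp: fun_eq_iff)
  with h show "\<omega> \<in> space M \<and> history n \<omega> \<in> paths n \<and> P (history n \<omega>)"
    unfolding cylinder_def by auto
next
  assume "\<omega> \<in> space M \<and> history n \<omega> \<in> paths n \<and> P (history n \<omega>)"
  moreover have "\<omega> \<in> space M \<Longrightarrow> \<omega> \<in> cylinder n (history n \<omega>)"
    unfolding cylinder_def history_def by simp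
  ultimately show "\<omega> \<in> path_event n P" unfolding path_event_def by blast
qed

lemma cylinder_disjoint:
  assumes "h \<in> paths n" "h' \<in> paths n" "h \<noteq> h'"
  shows "cylinder n h \<inter> cylinder n h' = {}"
proof -
  obtain k where k: "h k \<noteq> h' k" using assms(3) by auto
  then have "k \<le> n" using mem_pathsD(2)[OF assms(1), of k] mem_pathsD(2)[OF assms(2), of k] by force
  then show ?thesis using k unfolding cylinder_def by auto
qed

lemma measure_path_event: "measure M (path_event n P) = E_path n (\<lambda>h. if P h then 1 else 0)"
proof -
  have "measure M (path_event n P) = (\<Sum>h\<in>{h \<in> paths n. P h}. measure M (cylinder n h))"
    unfolding path_event_def
    using finite_paths cylinder_sets cylinder_disjoint P.emeasure_finite
    by (intro measure_finite_Union) (auto simp: disjoint_family_on_def)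
  also have "\<dots> = (\<Sum>h\<in>paths n. if P h then path_prob n h else 0)"
    unfolding path_prob_def by (rule sum.inter_filter[OF finite_paths])
  also have "\<dots> = (\<Sum>h\<in>paths n. path_prob n h * (if P h then 1 else 0))"
    by (intro sum.cong) auto
  finally show ?thesis unfolding E_path_def .
qed

lemma AE_regular: "AE \<omega> in M. \<omega> \<in> regular"
proof -
  have "AE \<omega> in M. \<omega> \<in> path_event n (\<lambda>_. True)" for n
    using measure_path_event[of n "\<lambda>_. True"] by (intro P.AE_prob_1) (simp add: E_path_const)
  then have "AE \<omega> in M. \<forall>n. \<omega> \<in> path_event n (\<lambda>_. True)" by (simp add: AE_all_countable)
  then show ?thesis by eventually_elim (simp add: regular_def mem_path_event_iff)
qed

lemma history_depends_upto: "depends_upto n G \<Longrightarrow> G (history n \<omega>) = G (\<lambda>k. V k \<omega>)"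
  unfolding depends_upto_def history_def by auto

lemma regular_path_event_iff: "\<omega> \<in> regular \<Longrightarrow> \<omega> \<in> path_event n P \<longleftrightarrow> P (history n \<omega>)"
  by (simp add: regular_def mem_path_event_iff)

lemma regular_admissible: "\<omega> \<in> regular \<Longrightarrow> admissible (V k \<omega>)"
  using admissible_paths[of "history k \<omega>" k k] by (simp add: regular_def history_def)

definition oscillation_event :: "real \<Rightarrow> nat \<Rightarrow> nat \<Rightarrow> 'w set" where
  "oscillation_event \<epsilon> m K = path_event K (\<lambda>h. \<exists>j\<in>{m..K}. \<epsilon> \<le> \<bar>mart_sum m j h\<bar>) \<inter> regular"

definition compensator_event :: "real \<Rightarrow> nat \<Rightarrow> 'w set" where
  "compensator_event l n = path_event n (\<lambda>h. l \<le> compensator n h) \<inter> regular"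

lemma regular_sets: "regular \<in> sets M"
proof -
  have "regular = (\<Inter>n. path_event n (\<lambda>_. True))"
    unfolding regular_def by (auto simp: mem_path_event_iff)
  then show ?thesis using path_event_sets by auto
qed

lemma mem_oscillation_event_iff:
  assumes "\<omega> \<in> regular"
  shows "\<omega> \<in> oscillation_event \<epsilon> m K \<longleftrightarrow> (\<exists>j\<in>{m..K}. \<epsilon> \<le> \<bar>mart_sum m j (\<lambda>k. V k \<omega>)\<bar>)"
proof -
  have "mart_sum m j (history K \<omega>) = mart_sum m j (\<lambda>k. V k \<omega>)" if "j \<le> K" for j
    using history_depends_upto[OF depends_upto_mono[OF depends_upto_mart_sum that]] .
  then show ?thesis using assms by (auto simp: oscillation_event_def regular_path_event_iff)
qed

lemma mem_compensator_event_iff: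
  assumes "\<omega> \<in> regular"
  shows "\<omega> \<in> compensator_event l n \<longleftrightarrow> l \<le> compensator n (\<lambda>k. V k \<omega>)"
proof -
  have "depends_upto n (compensator n)"
    unfolding depends_upto_def compensator_def by (auto intro!: sum.cong)
  then show ?thesis
    using assms by (simp add: compensator_event_def regular_path_event_iff history_depends_upto)
qed

lemma incseq_oscillation_event: "incseq (oscillation_event \<epsilon> m)"
proof (rule incseq_SucI, rule subsetI)
  fix K \<omega> assume \<omega>: "\<omega> \<in> oscillation_event \<epsilon> m K"
  then have "\<omega> \<in> regular" by (simp add: oscillation_event_def)
  with \<omega> show "\<omega> \<in> oscillation_event \<epsilon> m (Suc K)" by (auto simp: mem_oscillation_event_iff le_Suc_eq)
qed

lemma incseq_compensator_event: "incseq (compensator_event l)"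
proof (rule incseq_SucI, rule subsetI)
  fix n \<omega> assume \<omega>: "\<omega> \<in> compensator_event l n"
  then have "\<omega> \<in> regular" by (simp add: compensator_event_def)
  moreover have "compensator n (\<lambda>k. V k \<omega>) \<le> compensator (Suc n) (\<lambda>k. V k \<omega>)"
    by (rule compensator_mono) simp
  ultimately show "\<omega> \<in> compensator_event l (Suc n)"
    using \<omega> by (simp add: mem_compensator_event_iff)
qed

lemma measure_oscillation_event:
  assumes "0 < \<epsilon>" "\<And>i. expected_growth i \<le> L"
  shows "measure M (oscillation_event \<epsilon> m K) \<le> 36 * coef_total^2 / \<epsilon>^2 * (L - expected_growth m)"
proof (cases "m \<le> K")
  case True
  have "measure M (oscillation_event \<epsilon> m K)
      \<le> measure M (path_event K (\<lambda>h. \<exists>j\<in>{m..K}. \<epsilon> \<le> \<bar>mart_sum m j h\<bar>))"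
    unfolding oscillation_event_def using path_event_sets by (intro P.finite_measure_mono) auto
  also have "\<dots> = E_path K (exceeds m \<epsilon> K)" unfolding measure_path_event exceeds_def ..
  also have "\<dots> \<le> 36 * coef_total^2 / \<epsilon>^2 * (L - expected_growth m)"
    using kolmogorov_maximal[OF assms(1) True] assms mult_left_mono[OF assms(2)[of K], of "36 * coef_total^2"]
    by (simp add: field_simps)
  finally show ?thesis .
next
  case False
  then have "oscillation_event \<epsilon> m K = {}"
    unfolding oscillation_event_def using assms(1) by (auto simp: mem_path_event_iff)
  then show ?thesis using assms(2)[of m] by simp
qed

lemma AE_small_oscillation:
  assumes "0 < \<epsilon>" shows "AE \<omega> in M. \<exists>m. \<forall>j\<ge>m. \<bar>mart_sum m j (\<lambda>k. V k \<omega>)\<bar> < \<epsilon>"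
proof -
  obtain L where L: "expected_growth \<longlonglongrightarrow> L" "\<And>i. expected_growth i \<le> L"
    using incseq_convergent[OF incseq_expected_growth, of growth_budget] expected_growth_le_budget by blast
  define N where "N = (\<Inter>m. \<Union>K. oscillation_event \<epsilon> m K)"
  have sets: "oscillation_event \<epsilon> m K \<in> sets M" for m K
    unfolding oscillation_event_def using path_event_sets regular_sets by auto
  have "measure M N \<le> 36 * coef_total^2 / \<epsilon>^2 * (L - expected_growth m)" for m
  proof -
    have "measure M N \<le> measure M (\<Union>K. oscillation_event \<epsilon> m K)"
      unfolding N_def using sets by (intro P.finite_measure_mono) auto
    also have "\<dots> \<le> 36 * coef_total^2 / \<epsilon>^2 * (L - expected_growth m)"
      using sets incseq_oscillation_event measure_oscillation_event[OF assms L(2)]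
      by (rule P.measure_UN_incseq_le)
    finally show ?thesis .
  qed
  moreover have "(\<lambda>m. 36 * coef_total^2 / \<epsilon>^2 * (L - expected_growth m)) \<longlonglongrightarrow> 0"
    using tendsto_diff[OF tendsto_const L(1), of L] by (intro tendsto_mult_right_zero) simp
  ultimately have "AE \<omega> in M. \<omega> \<notin> N"
    using sets by (intro P.AE_notin_if_measure_le_tendsto_0) (auto simp: N_def)
  then show ?thesis using AE_regular
  proof eventually_elim
    case (elim \<omega>)
    then obtain m where "\<forall>K. \<omega> \<notin> oscillation_event \<epsilon> m K" by (auto simp: N_def)
    then have "\<bar>mart_sum m j (\<lambda>k. V k \<omega>)\<bar> < \<epsilon>" if "m \<le> j" for j
      using that elim by (force simp: mem_oscillation_event_iff not_le)
    then show ?case by blast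
  qed
qed

lemma AE_bounded_compensator: "AE \<omega> in M. \<exists>l. \<forall>n. compensator n (\<lambda>k. V k \<omega>) \<le> l"
proof -
  define N where "N = (\<Inter>q. \<Union>n. compensator_event (real (Suc q)) n)"
  have sets: "compensator_event l n \<in> sets M" for l n
    unfolding compensator_event_def using path_event_sets regular_sets by auto
  have "measure M N \<le> growth_budget / real (Suc q)" for q
  proof -
    have "measure M N \<le> measure M (\<Union>n. compensator_event (real (Suc q)) n)"
      unfolding N_def using sets by (intro P.finite_measure_mono) auto
    also have "\<dots> \<le> growth_budget / real (Suc q)"
    proof (rule P.measure_UN_incseq_le[OF sets incseq_compensator_event])
      fix n
      have "measure M (compensator_event (real (Suc q)) n)
          \<le> measure M (path_event n (\<lambda>h. real (Suc q) \<le> compensator n h))"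
        unfolding compensator_event_def using path_event_sets by (intro P.finite_measure_mono) auto
      also have "\<dots> \<le> growth_budget / real (Suc q)"
        unfolding measure_path_event by (rule markov_compensator) simp
      finally show "measure M (compensator_event (real (Suc q)) n) \<le> growth_budget / real (Suc q)" .
    qed
    finally show ?thesis .
  qed
  moreover have "(\<lambda>q. growth_budget / real (Suc q)) \<longlonglongrightarrow> 0"
    using LIMSEQ_Suc[OF lim_const_over_n[of growth_budget]] by simp
  ultimately have "AE \<omega> in M. \<omega> \<notin> N"
    using sets by (intro P.AE_notin_if_measure_le_tendsto_0) (auto simp: N_def)
  then show ?thesis using AE_regular
  proof eventually_elim
    case (elim \<omega>)
    then obtain q where "\<forall>n. \<omega> \<notin> compensator_event (real (Suc q)) n" by (auto simp: N_def)
    then show ?case using elim by (auto simp: mem_compensator_event_iff not_le intro: less_imp_le)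
  qed
qed

end

theorem (in reinforcement_process) AE_convergent_payoff:
  "AE \<omega> in M. convergent (\<lambda>n. payoff adj a pW (normalise (V n \<omega>)))"
proof -
  have "AE \<omega> in M. \<forall>q. \<exists>m. \<forall>j\<ge>m. \<bar>mart_sum m j (\<lambda>k. V k \<omega>)\<bar> < inverse (real (Suc q))"
    by (simp add: AE_all_countable AE_small_oscillation)
  then show ?thesis using AE_regular AE_bounded_compensator
  proof eventually_elim
    case (elim \<omega>)
    then obtain l where l: "\<And>n. compensator n (\<lambda>k. V k \<omega>) \<le> l" by blast
    have "convergent (\<lambda>n. H (V n \<omega>))"
    proof (rule convergent_H_trajectory[OF regular_admissible[OF elim(2)] _ l])
      fix \<epsilon> :: real assume "0 < \<epsilon>"
      then obtain q where "inverse (real (Suc q)) < \<epsilon>" using reals_Archimedean by blast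
      then show "\<exists>m. \<forall>j\<ge>m. \<bar>mart_sum m j (\<lambda>k. V k \<omega>)\<bar> < \<epsilon>" using elim(1) by (meson less_trans)
    qed
    then show ?case using payoff_normalise[OF regular_admissible[OF elim(2)]] by simp
  qed
qed

theorem theorem1:
  fixes adj :: "'v::finite \<Rightarrow> 'v \<Rightarrow> bool"
    and a :: "'v \<Rightarrow> 'v \<Rightarrow> real"
    and pW :: "'v set \<Rightarrow> real"
    and v0 :: "'v \<Rightarrow> 'v \<Rightarrow> real"
    and M :: "'w measure"
    and V :: "nat \<Rightarrow> 'w \<Rightarrow> ('v \<Rightarrow> 'v \<Rightarrow> real)"
  assumes adj_sym: "\<And>i j. adj i j \<longleftrightarrow> adj j i"
    and adj_irrefl: "\<And>i. \<not> adj i i"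
    and a_nonneg: "\<And>i j. a i j \<ge> 0"
    and a_sym: "\<And>i j. a i j = a j i"
    and a_adj: "\<And>i j. a i j > 0 \<Longrightarrow> adj i j"
    and pW_nonneg: "\<And>W. pW W \<ge> 0"
    and pW_sum: "(\<Sum>W\<in>UNIV. pW W) = 1"
    and nondeg: "\<exists>i j. a i j * pedge adj pW i j > 0"
    and v0_sym: "\<And>i j. v0 i j = v0 j i"
    and v0_nonneg: "\<And>i j. v0 i j \<ge> 0"
    and v0_pos: "\<And>i j. v0 i j > 0 \<longleftrightarrow> adj i j"
    and M: "prob_space M"
    and V_meas: "\<And>n s. {\<omega> \<in> space M. V n \<omega> = s} \<in> sets M"
    and V_init: "measure M {\<omega> \<in> space M. V 0 \<omega> = v0} = 1"
    and V_markov: "\<And>n (s :: nat \<Rightarrow> ('v \<Rightarrow> 'v \<Rightarrow> real)) t.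
        measure M {\<omega> \<in> space M. (\<forall>k\<le>n. V k \<omega> = s k) \<and> V (Suc n) \<omega> = t}
        = measure M {\<omega> \<in> space M. \<forall>k\<le>n. V k \<omega> = s k} * pmf (step adj a pW (s n)) t"
  shows "AE \<omega> in M. convergent (\<lambda>n. payoff adj a pW (normalise (V n \<omega>)))"
proof -
  interpret reinforcement_process adj a pW v0 M V
    by (intro reinforcement_process.intro reinforcement_model.intro reinforcement_process_axioms.intro)
      (fact assms)+
  show ?thesis by (rule AE_convergent_payoff)
qed

end
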